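(* In the model of the context with $p=q=1$ and $L\ge2$: if $\beta<\frac{\gamma}{L-1}$ then $$\mathtt{P_L}\le\left(1-\left(\frac{\gamma}{\beta}-(L-2)\right)^{-2/\alpha}\right)^{L-1},$$ and if $\beta\ge\frac{\gamma}{L-1}$ then $\mathtt{P_L}=0$.
   Context: Model: Let $\Phi$ be a homogeneous Poisson point process on $\mathbb{R}^2$ of intensity $\lambda>0$ (base stations); the user is at the origin. Label the points in increasing distance as $x_1,x_2,\dots$. Fix an integer $L$, $\alpha>2$, $P>0$, $\sigma^2\ge0$, $\gamma>0$, $\beta>0$, $p,q\in[0,1]$. Independently of $\Phi$ and each other let $a_1,\dots,a_L$ be Bernoulli($p$) and $b_{L+1},b_{L+2},\dots$ be Bernoulli($q$). For $k\le L$, $$\mathsf{SINR}_k(L)=\frac{P\|x_k\|^{-\alpha}}{\sum_{i=1,i\ne k}^{L}a_iP\|x_i\|^{-\alpha}+\sum_{j=L+1}^\infty b_jP\|x_j\|^{-\alpha}+\sigma^2},$$ and $\mathtt{P_L}=\mathbb{E}\left[\prod_{k=1}^L\mathbb{1}(\mathsf{SINR}_k(L)\ge\beta/\gamma)\right]$. *)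

theory Defs
  imports "HOL-Probability.Probability"
begin

definition poisson_point_process ::
  "'w measure \<Rightarrow> ('w \<Rightarrow> (real^2) set) \<Rightarrow> real \<Rightarrow> bool" where
  "poisson_point_process M Phi lam \<longleftrightarrow>
     prob_space M \<and>
     (\<forall>\<omega>\<in>space M. \<forall>B. bounded B \<longrightarrow> finite (Phi \<omega> \<inter> B)) \<and>
     (\<forall>B \<in> sets lborel. bounded B \<longrightarrow>
        (\<forall>k::nat. measure M {\<omega>\<in>space M. card (Phi \<omega> \<inter> B) = k}
            = (lam * measure lborel B) ^ k / fact k * exp (- (lam * measure lborel B)))) \<and>
     (\<forall>(n::nat) (B :: nat \<Rightarrow> (real^2) set).
        (\<forall>i<n. B i \<in> sets lborel \<and> bounded (B i)) \<and> disjoint_family_on B {..<n} \<longrightarrow>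
        prob_space.indep_vars M (\<lambda>_. count_space UNIV) (\<lambda>i \<omega>. card (Phi \<omega> \<inter> B i)) {..<n})"

text \<open>Distance from the origin of the k-th nearest point (k >= 1) of a point set,
  i.e. norm of x_k when points are labelled in increasing distance (ties counted
  with multiplicity).\<close>

definition kth_dist :: "(real^2) set \<Rightarrow> nat \<Rightarrow> real" where
  "kth_dist S k = Inf {r::real. k \<le> card (S \<inter> cball 0 r)}"

text \<open>SINR_k(L). The Bernoulli marks are c i (i = 1..L: a_i; i >= L+1: b_i).\<close>

definition SINR ::
  "(real^2) set \<Rightarrow> (nat \<Rightarrow> bool) \<Rightarrow> nat \<Rightarrow> real \<Rightarrow> real \<Rightarrow> real \<Rightarrow> nat \<Rightarrow> real" where
  "SINR S c L alpha P sigma2 k =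
     P * kth_dist S k powr (- alpha) /
     ((\<Sum>i\<in>{1..L} - {k}. of_bool (c i) * P * kth_dist S i powr (- alpha))
      + (\<Sum>n. of_bool (c (n + L + 1)) * P * kth_dist S (n + L + 1) powr (- alpha))
      + sigma2)"

definition coverage_PL ::
  "'w measure \<Rightarrow> ('w \<Rightarrow> (real^2) set) \<Rightarrow> (nat \<Rightarrow> 'w \<Rightarrow> bool) \<Rightarrow> nat \<Rightarrow> real \<Rightarrow> real \<Rightarrow> real
     \<Rightarrow> real \<Rightarrow> real \<Rightarrow> real" where
  "coverage_PL M Phi c L alpha P sigma2 gamma beta =
     (\<integral>\<omega>. (\<Prod>k\<in>{1..L}. of_bool (beta / gamma \<le> SINR (Phi \<omega>) (\<lambda>i. c i \<omega>) L alpha P sigma2 k)) \<partial>M)"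

end

theory Submission
  imports Defs "HOL-Real_Asymp.Real_Asymp"
begin

text \<open>With all marks equal to one, write \<open>\<theta> = \<beta>/\<gamma>\<close> and \<open>a\<^sub>i = d\<^sub>i\<^sup>-\<^sup>\<alpha>\<close> for the nearest
  distances \<open>d\<^sub>i\<close>. The \<open>L - 2\<close> middle signals are at least \<open>a\<^sub>L\<close> and the interference from
  beyond the \<open>L\<close>-th station is strictly positive, so \<open>\<theta> \<le> SINR\<^sub>L\<close> forces
  \<open>a\<^sub>1 < (1/\<theta> - (L - 2)) a\<^sub>L\<close>. For \<open>\<theta> \<ge> 1/(L - 1)\<close> this contradicts \<open>a\<^sub>1 \<ge> a\<^sub>L\<close>,
  whence \<open>P\<^sub>L = 0\<close>. Otherwise it says that in area coordinates \<open>\<lambda>\<pi>d\<^sup>2\<close> the nearest point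
  lies beyond the fraction \<open>s = (\<gamma>/\<beta> - (L - 2))\<^sup>-\<^sup>2\<^sup>/\<^sup>\<alpha>\<close> of the \<open>L\<close>-th one. In these
  coordinates the process is a unit-rate Poisson process on the half-line, so given the
  \<open>L\<close>-th point the nearer ones are uniform and the event has probability \<open>(1 - s)\<^sup>L\<^sup>-\<^sup>1\<close>.
  Instead of conditioning, the event is covered by the union over \<open>n\<close> of the events
  "the \<open>L\<close>-th point has area coordinate in \<open>[n h, (n + 1) h)\<close> and no point has one below
  \<open>\<lfloor>s n\<rfloor> h\<close>", whose probabilities sum to a bound tending to \<open>(1 - s)\<^sup>L\<^sup>-\<^sup>1\<close> as \<open>h \<rightarrow> 0\<close>.
  For \<open>\<alpha> > 2\<close> the interference series converges almost surely because
  \<open>E #(\<Phi> \<inter> B(0, 2\<^sup>j)) = \<lambda>\<pi>4\<^sup>j\<close> makes \<open>2\<^sup>-\<^sup>b\<^sup>j #(\<Phi> \<inter> B(0, 2\<^sup>j))\<close> summable for \<open>2 < b < \<alpha>\<close>.\<close>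

section \<open>Nearest-neighbour distances of point sets\<close>

definition locally_finite_points :: "(real^2) set \<Rightarrow> bool" where
  "locally_finite_points S \<longleftrightarrow> (\<forall>B. bounded B \<longrightarrow> finite (S \<inter> B))"

lemma locally_finite_points_Int_cball: "locally_finite_points S \<Longrightarrow> finite (S \<inter> cball 0 r)"
  unfolding locally_finite_points_def by auto

lemma locally_finite_points_Int_ball: "locally_finite_points S \<Longrightarrow> finite (S \<inter> ball 0 r)"
  unfolding locally_finite_points_def by auto

lemma exists_cball_card_ge:
  assumes lf: "locally_finite_points S" and inf: "infinite S"
  shows "\<exists>R. k \<le> card (S \<inter> cball 0 R)"
proof -
  obtain T where T: "finite T" "card T = k" "T \<subseteq> S"
    using infinite_arbitrarily_large[OF inf] by blast
  obtain R where "\<forall>x\<in>T. norm x \<le> R"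
    using finite_imp_bounded[OF T(1)] by (auto simp: bounded_iff)
  then have "T \<subseteq> S \<inter> cball 0 R" using T(3) by auto
  then show ?thesis using card_mono[OF locally_finite_points_Int_cball[OF lf]] T(2) by metis
qed

lemma bdd_below_kth_dist_radii: "1 \<le> k \<Longrightarrow> bdd_below {r::real. k \<le> card (S \<inter> cball 0 r)}"
proof (rule bdd_belowI[of _ 0])
  fix r assume "1 \<le> k" and "r \<in> {r::real. k \<le> card (S \<inter> cball 0 r)}"
  then have "cball (0::real^2) r \<noteq> {}" by auto
  then show "0 \<le> r" by simp
qed

lemma kth_dist_le:
  assumes "1 \<le> k" "k \<le> card (S \<inter> cball 0 r)"
  shows "kth_dist S k \<le> r"
  unfolding kth_dist_def
  by (rule cInf_lower) (use assms bdd_below_kth_dist_radii[OF assms(1)] in auto)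

lemma kth_dist_less_if_card_ball:
  assumes lf: "locally_finite_points S" and k: "1 \<le> k" "k \<le> card (S \<inter> ball 0 r)"
  shows "kth_dist S k < r"
proof -
  let ?F = "S \<inter> ball 0 r"
  have fin: "finite ?F" using locally_finite_points_Int_ball[OF lf] .
  have ne: "?F \<noteq> {}" using k by auto
  define r' where "r' = Max (norm ` ?F)"
  have "?F \<subseteq> S \<inter> cball 0 r'"
    unfolding r'_def using fin by (auto intro!: Max_ge)
  then have "card ?F \<le> card (S \<inter> cball 0 r')"
    by (rule card_mono[OF locally_finite_points_Int_cball[OF lf]])
  then have "kth_dist S k \<le> r'" using k by (intro kth_dist_le) auto
  moreover have "r' < r" unfolding r'_def using fin ne by (subst Max_less_iff) auto
  ultimately show ?thesis by simp
qed

lemma card_ball_ge_if_kth_dist_less: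
  assumes lf: "locally_finite_points S" and inf: "infinite S" and lt: "kth_dist S k < r"
  shows "k \<le> card (S \<inter> ball 0 r)"
proof -
  have "{r::real. k \<le> card (S \<inter> cball 0 r)} \<noteq> {}" using exists_cball_card_ge[OF lf inf] by auto
  from cInf_lessD[OF this lt[unfolded kth_dist_def]]
  obtain r' where r': "k \<le> card (S \<inter> cball 0 r')" "r' < r" by auto
  have "S \<inter> cball 0 r' \<subseteq> S \<inter> ball 0 r" using r' by auto
  then have "card (S \<inter> cball 0 r') \<le> card (S \<inter> ball 0 r)"
    by (rule card_mono[OF locally_finite_points_Int_ball[OF lf]])
  then show ?thesis using r' by simp
qed

lemma card_cball_ge_if_kth_dist_less:
  assumes lf: "locally_finite_points S" and inf: "infinite S" and lt: "kth_dist S k < r"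
  shows "k \<le> card (S \<inter> cball 0 r)"
proof -
  have "card (S \<inter> ball 0 r) \<le> card (S \<inter> cball 0 r)"
    by (rule card_mono[OF locally_finite_points_Int_cball[OF lf]]) auto
  then show ?thesis using card_ball_ge_if_kth_dist_less[OF assms] by simp
qed

lemma kth_dist_mono:
  assumes lf: "locally_finite_points S" and inf: "infinite S" and "1 \<le> i" "i \<le> k"
  shows "kth_dist S i \<le> kth_dist S k"
  unfolding kth_dist_def
  by (rule cInf_superset_mono)
     (use assms exists_cball_card_ge[OF lf inf, of k] bdd_below_kth_dist_radii[of i S] in auto)

lemma kth_dist_pos:
  assumes lf: "locally_finite_points S" and z: "0 \<notin> S" and inf: "infinite S" and k: "1 \<le> k"
  shows "0 < kth_dist S k"
proof -
  obtain \<delta> where \<delta>: "\<delta> > 0" "\<forall>x\<in>S \<inter> cball 0 1. x \<noteq> 0 \<longrightarrow> \<delta> \<le> dist 0 x"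
    using finite_set_avoid[OF locally_finite_points_Int_cball[OF lf, of 1], of 0] by auto
  have "min \<delta> 1 / 2 \<le> kth_dist S k"
    unfolding kth_dist_def
  proof (rule cInf_greatest)
    show "{r. k \<le> card (S \<inter> cball 0 r)} \<noteq> {}" using exists_cball_card_ge[OF lf inf] by auto
    fix r assume r: "r \<in> {r. k \<le> card (S \<inter> cball 0 r)}"
    show "min \<delta> 1 / 2 \<le> r"
    proof (rule ccontr)
      assume small: "\<not> min \<delta> 1 / 2 \<le> r"
      have "x \<notin> S" if "norm x \<le> r" for x :: "real^2"
      proof
        assume "x \<in> S"
        moreover have "norm x \<le> 1" using that small by linarith
        ultimately have "\<delta> \<le> norm x" using \<delta>(2) z by (metis IntI mem_cball_0 dist_0_norm)
        then show False using that small min.cobounded1[of \<delta> 1] \<delta>(1) by linarith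
      qed
      then have "S \<inter> cball 0 r = {}" by auto
      then show False using r k by simp
    qed
  qed
  then show ?thesis using \<delta>(1) by linarith
qed

lemma exists_dyadic_bracket:
  fixes r :: real assumes "1 \<le> r" shows "\<exists>j::nat. r \<le> 2 ^ j \<and> 2 ^ j \<le> 2 * r"
proof -
  define j where "j = nat \<lceil>log 2 r\<rceil>"
  have "real j = real_of_int \<lceil>log 2 r\<rceil>" unfolding j_def using assms by simp
  then have e: "(2::real) ^ j = 2 powr \<lceil>log 2 r\<rceil>" by (simp add: powr_realpow[symmetric])
  have "r = 2 powr log 2 r" using assms by simp
  also have "\<dots> \<le> 2 powr \<lceil>log 2 r\<rceil>" by (intro powr_mono) auto
  finally have lo: "r \<le> 2 ^ j" using e by simp
  have "2 powr \<lceil>log 2 r\<rceil> \<le> 2 powr (log 2 r + 1)" by (intro powr_mono) linarith+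
  also have "\<dots> = 2 * r" using assms by (simp add: powr_add)
  finally show ?thesis using lo e by (intro exI[of _ j]) simp
qed

lemma powr_neg_le_if_le_powr:
  fixes d b \<alpha> x K :: real
  assumes d: "0 < d" and b: "0 < b" and \<alpha>: "0 \<le> \<alpha>" and x: "0 < x" and le: "x \<le> K * d powr b"
  shows "d powr - \<alpha> \<le> K powr (\<alpha> / b) * x powr (- \<alpha> / b)"
proof -
  have K: "0 < K" using le x d by (smt (verit) mult_nonpos_nonneg powr_ge_zero)
  have "d powr - \<alpha> = (d powr b) powr (- \<alpha> / b)" using b by (simp add: powr_powr)
  also have "\<dots> \<le> (x / K) powr (- \<alpha> / b)"
    by (rule powr_mono2') (use b \<alpha> x K le in \<open>auto simp: divide_le_eq mult.commute\<close>)
  also have "\<dots> = K powr (\<alpha> / b) * x powr (- \<alpha> / b)"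
    using x K by (simp add: powr_divide powr_minus_divide divide_simps)
  finally show ?thesis .
qed

lemma summable_kth_dist_powr:
  fixes S :: "(real^2) set" and b \<alpha> C :: real
  assumes lf: "locally_finite_points S" and z: "0 \<notin> S" and inf: "infinite S"
    and b: "0 < b" "b < \<alpha>"
    and growth: "\<And>r. 1 \<le> r \<Longrightarrow> real (card (S \<inter> cball 0 r)) \<le> C * r powr b"
  shows "summable (\<lambda>n. kth_dist S (n + 1) powr - \<alpha>)"
proof -
  define g where "g n = (C * 2 powr b) powr (\<alpha> / b) * real (n + 1) powr (- \<alpha> / b)" for n
  have "summable (\<lambda>n. real n powr (- \<alpha> / b))"
    using b by (subst summable_real_powr_iff) (simp add: field_simps)
  then have "summable (\<lambda>n. real (n + 1) powr (- \<alpha> / b))"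
    using summable_iff_shift[of "\<lambda>m. real m powr (- \<alpha> / b)" 1] by simp
  then have "summable g" unfolding g_def by (rule summable_mult)
  then show ?thesis
  proof (rule summable_comparison_test'[where N = "card (S \<inter> cball 0 1)"])
    fix n assume n: "n \<ge> card (S \<inter> cball 0 1)"
    define d where "d = kth_dist S (n + 1)"
    have dpos: "0 < d" unfolding d_def by (rule kth_dist_pos[OF lf z inf]) simp
    have "1 \<le> d"
    proof (rule ccontr)
      assume "\<not> 1 \<le> d"
      then have "n + 1 \<le> card (S \<inter> cball 0 1)"
        using card_cball_ge_if_kth_dist_less[OF lf inf] unfolding d_def by simp
      then show False using n by simp
    qed
    then have "n + 1 \<le> card (S \<inter> cball 0 (2 * d))"
      using card_cball_ge_if_kth_dist_less[OF lf inf] unfolding d_def by simp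
    then have "real (n + 1) \<le> C * (2 * d) powr b"
      using growth[of "2 * d"] \<open>1 \<le> d\<close> by simp
    then have "real (n + 1) \<le> (C * 2 powr b) * d powr b"
      using dpos by (simp add: powr_mult mult.assoc)
    then have "d powr - \<alpha> \<le> g n"
      unfolding g_def using dpos b by (intro powr_neg_le_if_le_powr) auto
    then show "norm (kth_dist S (n + 1) powr - \<alpha>) \<le> g n" unfolding d_def by simp
  qed
qed

section \<open>Poisson point processes\<close>

lemma measure_cball_plane: "0 \<le> r \<Longrightarrow> measure lborel (cball (0::real^2) r) = unit_ball_vol 2 * r\<^sup>2"
  using content_cball[of r "0::real^2"] by simp

lemma measure_ball_plane: "0 \<le> r \<Longrightarrow> measure lborel (ball (0::real^2) r) = unit_ball_vol 2 * r\<^sup>2"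
  using content_ball[of r "0::real^2"] by simp

lemma ppp_prob_space: "poisson_point_process M Phi lam \<Longrightarrow> prob_space M"
  unfolding poisson_point_process_def by (elim conjE)

lemma ppp_locally_finite:
  assumes "poisson_point_process M Phi lam" "\<omega> \<in> space M"
  shows "locally_finite_points (Phi \<omega>)"
proof -
  have "\<forall>\<omega>\<in>space M. \<forall>B. bounded B \<longrightarrow> finite (Phi \<omega> \<inter> B)"
    using assms(1) unfolding poisson_point_process_def by (elim conjE)
  then show ?thesis using assms(2) unfolding locally_finite_points_def by simp
qed

lemma ppp_indep_counts:
  fixes n :: nat and B :: "nat \<Rightarrow> (real^2) set"
  assumes "poisson_point_process M Phi lam"
    and "\<And>i. i < n \<Longrightarrow> B i \<in> sets lborel \<and> bounded (B i)" and "disjoint_family_on B {..<n}"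
  shows "prob_space.indep_vars M (\<lambda>_. count_space UNIV) (\<lambda>i \<omega>. card (Phi \<omega> \<inter> B i)) {..<n}"
proof -
  have "\<forall>(n::nat) (B :: nat \<Rightarrow> (real^2) set).
        (\<forall>i<n. B i \<in> sets lborel \<and> bounded (B i)) \<and> disjoint_family_on B {..<n} \<longrightarrow>
        prob_space.indep_vars M (\<lambda>_. count_space UNIV) (\<lambda>i \<omega>. card (Phi \<omega> \<inter> B i)) {..<n}"
    using assms(1) unfolding poisson_point_process_def by (elim conjE)
  from spec[OF spec[OF this, of n], of B] show ?thesis using assms(2,3) by simp
qed

lemma ppp_count_prob:
  assumes "poisson_point_process M Phi lam" and "B \<in> sets lborel" "bounded B"
  shows "measure M {\<omega>\<in>space M. card (Phi \<omega> \<inter> B) = k}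
    = (lam * measure lborel B) ^ k / fact k * exp (- (lam * measure lborel B))"
proof -
  have "\<forall>B \<in> sets lborel. bounded B \<longrightarrow>
        (\<forall>k::nat. measure M {\<omega>\<in>space M. card (Phi \<omega> \<inter> B) = k}
            = (lam * measure lborel B) ^ k / fact k * exp (- (lam * measure lborel B)))"
    using assms(1) unfolding poisson_point_process_def by (elim conjE)
  then show ?thesis using assms(2,3) by simp
qed

lemma ppp_count_measurable:
  assumes ppp: "poisson_point_process M Phi lam" and B: "B \<in> sets lborel" "bounded B"
  shows "(\<lambda>\<omega>. card (Phi \<omega> \<inter> B)) \<in> measurable M (count_space UNIV)"
proof -
  interpret prob_space M using ppp_prob_space[OF ppp] .
  have "indep_vars (\<lambda>_. count_space UNIV) (\<lambda>i \<omega>. card (Phi \<omega> \<inter> (\<lambda>_::nat. B) i)) {..<1}"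
    by (rule ppp_indep_counts[OF ppp]) (use B in \<open>simp_all add: disjoint_family_on_def\<close>)
  then show ?thesis unfolding indep_vars_def by auto
qed

lemma ppp_count_sets:
  assumes "poisson_point_process M Phi lam" and "B \<in> sets lborel" "bounded B"
  shows "{\<omega>\<in>space M. card (Phi \<omega> \<inter> B) \<in> A} \<in> sets M"
proof -
  have "{\<omega>\<in>space M. card (Phi \<omega> \<inter> B) \<in> A} = (\<lambda>\<omega>. card (Phi \<omega> \<inter> B)) -` A \<inter> space M"
    by auto
  also have "\<dots> \<in> sets M" by (rule measurable_sets[OF ppp_count_measurable[OF assms]]) simp
  finally show ?thesis .
qed

lemma ppp_count_sets_eq:
  assumes "poisson_point_process M Phi lam" and "B \<in> sets lborel" "bounded B"
  shows "{\<omega>\<in>space M. card (Phi \<omega> \<inter> B) = k} \<in> sets M"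
  using ppp_count_sets[OF assms, of "{k}"] by simp

lemma ppp_indep_counts3:
  fixes B :: "nat \<Rightarrow> (real^2) set"
  assumes ppp: "poisson_point_process M Phi lam"
    and B: "\<And>i. i < 3 \<Longrightarrow> B i \<in> sets lborel \<and> bounded (B i)"
    and disj: "B 0 \<inter> B 1 = {}" "B 0 \<inter> B 2 = {}" "B 1 \<inter> B 2 = {}"
  shows "measure M ({\<omega>\<in>space M. card (Phi \<omega> \<inter> B 0) \<in> A0}
       \<inter> {\<omega>\<in>space M. card (Phi \<omega> \<inter> B 1) \<in> A1} \<inter> {\<omega>\<in>space M. card (Phi \<omega> \<inter> B 2) \<in> A2})
     = measure M {\<omega>\<in>space M. card (Phi \<omega> \<inter> B 0) \<in> A0}
       * measure M {\<omega>\<in>space M. card (Phi \<omega> \<inter> B 1) \<in> A1}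
       * measure M {\<omega>\<in>space M. card (Phi \<omega> \<inter> B 2) \<in> A2}"
proof -
  interpret prob_space M using ppp_prob_space[OF ppp] .
  have df: "disjoint_family_on B {..<3}"
    unfolding disjoint_family_on_def
  proof (intro ballI impI)
    fix i j :: nat assume "i \<in> {..<3}" "j \<in> {..<3}" "i \<noteq> j"
    then have "(i=0\<and>j=1) \<or> (i=1\<and>j=0) \<or> (i=0\<and>j=2) \<or> (i=2\<and>j=0) \<or> (i=1\<and>j=2) \<or> (i=2\<and>j=1)"
      by (auto simp: lessThan_iff less_Suc_eq numeral_3_eq_3)
    then show "B i \<inter> B j = {}" using disj by (elim disjE conjE; simp add: Int_commute)
  qed
  have iv: "indep_vars (\<lambda>_. count_space UNIV) (\<lambda>i \<omega>. card (Phi \<omega> \<inter> B i)) {..<3}"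
    by (rule ppp_indep_counts[OF ppp B df])
  define A where "A i = (if i = 0 then A0 else if i = 1 then A1 else A2)" for i :: nat
  have J: "{0,1,2} \<subseteq> {..<3::nat}" by auto
  have "prob (\<Inter>i\<in>{0,1,2}. (\<lambda>\<omega>. card (Phi \<omega> \<inter> B i)) -` A i \<inter> space M)
     = (\<Prod>i\<in>{0,1,2}. prob ((\<lambda>\<omega>. card (Phi \<omega> \<inter> B i)) -` A i \<inter> space M))"
    by (rule indep_varsD[OF iv _ _ J]) auto
  moreover have "(\<lambda>\<omega>. card (Phi \<omega> \<inter> B i)) -` A i \<inter> space M = {\<omega>\<in>space M. card (Phi \<omega> \<inter> B i) \<in> A i}" for i
    by auto
  ultimately have indep_prod: "prob (\<Inter>i\<in>{0,1,2}. {\<omega>\<in>space M. card (Phi \<omega> \<inter> B i) \<in> A i})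
     = (\<Prod>i\<in>{0,1,2}. prob {\<omega>\<in>space M. card (Phi \<omega> \<inter> B i) \<in> A i})" by simp
  have inter_eq: "(\<Inter>i\<in>{0::nat,1,2}. {\<omega>\<in>space M. card (Phi \<omega> \<inter> B i) \<in> A i})
     = {\<omega>\<in>space M. card (Phi \<omega> \<inter> B 0) \<in> A0}
       \<inter> {\<omega>\<in>space M. card (Phi \<omega> \<inter> B 1) \<in> A1} \<inter> {\<omega>\<in>space M. card (Phi \<omega> \<inter> B 2) \<in> A2}"
    by (auto simp: A_def)
  have prod_eq: "(\<Prod>i\<in>{0::nat,1,2}. prob {\<omega>\<in>space M. card (Phi \<omega> \<inter> B i) \<in> A i})
     = prob {\<omega>\<in>space M. card (Phi \<omega> \<inter> B 0) \<in> A0}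
       * prob {\<omega>\<in>space M. card (Phi \<omega> \<inter> B 1) \<in> A1}
       * prob {\<omega>\<in>space M. card (Phi \<omega> \<inter> B 2) \<in> A2}"
    by (simp add: A_def)
  show ?thesis unfolding inter_eq[symmetric] prod_eq[symmetric] by (rule indep_prod)
qed

lemma ppp_count_ge1_le:
  assumes ppp: "poisson_point_process M Phi lam" and B: "B \<in> sets lborel" "bounded B"
  shows "measure M {\<omega>\<in>space M. card (Phi \<omega> \<inter> B) \<in> {1..}} \<le> lam * measure lborel B"
proof -
  interpret prob_space M using ppp_prob_space[OF ppp] .
  let ?\<mu> = "lam * measure lborel B"
  have "{\<omega>\<in>space M. card (Phi \<omega> \<inter> B) \<in> {1..}} = space M - {\<omega>\<in>space M. card (Phi \<omega> \<inter> B) = 0}"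
    by auto
  then have "prob {\<omega>\<in>space M. card (Phi \<omega> \<inter> B) \<in> {1..}} = 1 - prob {\<omega>\<in>space M. card (Phi \<omega> \<inter> B) = 0}"
    using prob_compl[OF ppp_count_sets_eq[OF ppp B]] by simp
  also have "\<dots> = 1 - exp (- ?\<mu>)" using ppp_count_prob[OF ppp B, of 0] by simp
  also have "\<dots> \<le> ?\<mu>" using exp_ge_add_one_self[of "- ?\<mu>"] by simp
  finally show ?thesis .
qed

lemma one_minus_exp_poisson_le_square:
  fixes \<mu> :: real assumes "0 \<le> \<mu>"
  shows "1 - (exp (- \<mu>) + \<mu> * exp (- \<mu>)) \<le> \<mu>\<^sup>2"
proof (cases "\<mu> \<le> 1")
  case True
  have "(1 - \<mu>) * (1 + \<mu>) \<le> exp (- \<mu>) * (1 + \<mu>)"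
    using exp_ge_add_one_self[of "- \<mu>"] assms by (intro mult_right_mono) auto
  then show ?thesis by (simp add: algebra_simps power2_eq_square)
next
  case False
  then have "1 * 1 \<le> \<mu> * \<mu>" by (intro mult_mono) auto
  then have "1 \<le> \<mu>\<^sup>2" by (simp add: power2_eq_square)
  moreover have "0 \<le> exp (- \<mu>) + \<mu> * exp (- \<mu>)" using assms by simp
  ultimately show ?thesis by simp
qed

lemma ppp_count_ge2_le:
  assumes ppp: "poisson_point_process M Phi lam" and B: "B \<in> sets lborel" "bounded B"
    and lam: "0 \<le> lam"
  shows "measure M {\<omega>\<in>space M. card (Phi \<omega> \<inter> B) \<in> {2..}} \<le> (lam * measure lborel B)\<^sup>2"
proof -
  interpret prob_space M using ppp_prob_space[OF ppp] .
  let ?\<mu> = "lam * measure lborel B"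
  let ?E = "\<lambda>k. {\<omega>\<in>space M. card (Phi \<omega> \<inter> B) = k}"
  have "{\<omega>\<in>space M. card (Phi \<omega> \<inter> B) \<in> {2..}} = space M - (?E 0 \<union> ?E 1)"
    by auto
  then have "prob {\<omega>\<in>space M. card (Phi \<omega> \<inter> B) \<in> {2..}} = 1 - prob (?E 0 \<union> ?E 1)"
    using prob_compl[of "?E 0 \<union> ?E 1"] ppp_count_sets_eq[OF ppp B] by auto
  also have "prob (?E 0 \<union> ?E 1) = prob (?E 0) + prob (?E 1)"
    by (rule finite_measure_Union) (use ppp_count_sets_eq[OF ppp B] in auto)
  also have "\<dots> = exp (- ?\<mu>) + ?\<mu> * exp (- ?\<mu>)"
    using ppp_count_prob[OF ppp B, of 0] ppp_count_prob[OF ppp B, of 1] by simp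
  also have "1 - \<dots> \<le> ?\<mu>\<^sup>2"
    using lam by (intro one_minus_exp_poisson_le_square) simp
  finally show ?thesis .
qed

lemma poisson_mean_sums: "(\<lambda>k. real k * (\<mu> ^ k / fact k * exp (- \<mu>))) sums (\<mu>::real)"
proof -
  have "(\<lambda>k. \<mu> ^ k / fact k) sums exp \<mu>"
    using exp_converges[of \<mu>] by (simp add: divide_inverse mult.commute)
  then have "(\<lambda>k. (\<mu> * exp (- \<mu>)) * (\<mu> ^ k / fact k)) sums ((\<mu> * exp (- \<mu>)) * exp \<mu>)"
    by (rule sums_mult)
  moreover have "(\<mu> * exp (- \<mu>)) * exp \<mu> = \<mu>" by (simp add: exp_minus)
  moreover have "(\<lambda>k. (\<mu> * exp (- \<mu>)) * (\<mu> ^ k / fact k))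
      = (\<lambda>k. real (Suc k) * (\<mu> ^ Suc k / fact (Suc k) * exp (- \<mu>)))"
    by (rule ext) (simp add: field_simps del: of_nat_Suc)
  ultimately have "(\<lambda>k. real (Suc k) * (\<mu> ^ Suc k / fact (Suc k) * exp (- \<mu>))) sums \<mu>"
    by metis
  then show ?thesis by (subst (asm) sums_Suc_iff) simp
qed

lemma ppp_count_nn_integral:
  assumes ppp: "poisson_point_process M Phi lam" and B: "B \<in> sets lborel" "bounded B"
  shows "(\<integral>\<^sup>+\<omega>. ennreal (real (card (Phi \<omega> \<inter> B))) \<partial>M) = ennreal (lam * measure lborel B)"
proof -
  interpret prob_space M using ppp_prob_space[OF ppp] .
  define \<mu> where "\<mu> = lam * measure lborel B"
  define p where "p k = \<mu> ^ k / fact k * exp (- \<mu>)" for k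
  let ?A = "\<lambda>k. {\<omega>\<in>space M. card (Phi \<omega> \<inter> B) = k}"
  have A: "?A k \<in> sets M" for k by (rule ppp_count_sets_eq[OF ppp B])
  have p: "prob (?A k) = p k" for k unfolding p_def \<mu>_def by (rule ppp_count_prob[OF ppp B])
  have p0: "0 \<le> p k" for k using p measure_nonneg by metis
  have mean: "(\<lambda>k. real k * p k) sums \<mu>" unfolding p_def by (rule poisson_mean_sums)
  have "ennreal (real (card (Phi \<omega> \<inter> B))) = (\<Sum>k. ennreal (real k) * indicator (?A k) \<omega>)"
    if "\<omega> \<in> space M" for \<omega>
  proof -
    have "(\<lambda>k. if k = card (Phi \<omega> \<inter> B) then ennreal (real k) else 0)
        sums ennreal (real (card (Phi \<omega> \<inter> B)))"
      by (rule sums_single)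
    moreover have "(\<lambda>k. if k = card (Phi \<omega> \<inter> B) then ennreal (real k) else 0)
        = (\<lambda>k. ennreal (real k) * indicator (?A k) \<omega>)"
      using that by (auto simp: indicator_def)
    ultimately show ?thesis by (simp add: sums_iff)
  qed
  then have "(\<integral>\<^sup>+\<omega>. ennreal (real (card (Phi \<omega> \<inter> B))) \<partial>M)
      = (\<integral>\<^sup>+\<omega>. (\<Sum>k. ennreal (real k) * indicator (?A k) \<omega>) \<partial>M)"
    by (intro nn_integral_cong) simp
  also have "\<dots> = (\<Sum>k. ennreal (real k) * emeasure M (?A k))"
    using A by (simp add: nn_integral_suminf nn_integral_cmult_indicator)
  also have "\<dots> = (\<Sum>k. ennreal (real k * p k))"
    using p0 by (simp add: emeasure_eq_measure p ennreal_mult')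
  also have "\<dots> = ennreal (\<Sum>k. real k * p k)"
    by (rule suminf_ennreal2) (use p0 mean in \<open>auto simp: sums_iff\<close>)
  also have "(\<Sum>k. real k * p k) = \<mu>"
    using mean by (simp add: sums_iff)
  finally show ?thesis unfolding \<mu>_def .
qed

section \<open>Almost sure properties of the Poisson process\<close>

lemma ppp_AE_not_origin:
  assumes ppp: "poisson_point_process M Phi lam"
  shows "AE \<omega> in M. 0 \<notin> Phi \<omega>"
proof -
  interpret prob_space M using ppp_prob_space[OF ppp] .
  have B: "{0::real^2} \<in> sets lborel" "bounded {0::real^2}" by auto
  have "prob {\<omega>\<in>space M. card (Phi \<omega> \<inter> {0}) = 0} = 1"
    using ppp_count_prob[OF ppp B, of 0] by simp
  then have "AE \<omega> in M. \<omega> \<in> {\<omega>\<in>space M. card (Phi \<omega> \<inter> {0}) = 0}" by (rule AE_prob_1)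
  then show ?thesis by (rule AE_mp) (auto intro!: AE_I2)
qed

lemma poisson_lower_tail_tendsto_0:
  fixes \<mu> :: "'a \<Rightarrow> real"
  assumes "filterlim \<mu> at_top F"
  shows "((\<lambda>x. \<Sum>k<n. \<mu> x ^ k / fact k * exp (- \<mu> x)) \<longlongrightarrow> 0) F"
proof (intro tendsto_null_sum)
  fix k
  have "((\<lambda>x. (\<mu> x ^ k / exp (\<mu> x)) / fact k) \<longlongrightarrow> 0 / fact k) F"
    by (intro tendsto_divide filterlim_compose[OF tendsto_power_div_exp_0 assms] tendsto_const) simp
  then show "((\<lambda>x. \<mu> x ^ k / fact k * exp (- \<mu> x)) \<longlongrightarrow> 0) F"
    by (simp add: exp_minus field_simps)
qed

lemma ppp_AE_exists_cball_count_ge: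
  assumes ppp: "poisson_point_process M Phi lam" and lam: "0 < lam"
  shows "AE \<omega> in M. \<exists>j::nat. n \<le> card (Phi \<omega> \<inter> cball 0 (real j))"
proof -
  interpret prob_space M using ppp_prob_space[OF ppp] .
  define \<mu> where "\<mu> j = lam * measure lborel (cball (0::real^2) (real j))" for j :: nat
  have B: "cball (0::real^2) (real j) \<in> sets lborel" "bounded (cball (0::real^2) (real j))" for j
    by auto
  have "filterlim (\<lambda>j. lam * unit_ball_vol 2 * real j ^ 2) at_top sequentially"
    using lam by real_asymp
  then have \<mu>_top: "filterlim \<mu> at_top sequentially"
    unfolding \<mu>_def using measure_cball_plane by (simp add: mult.assoc)
  let ?A = "\<lambda>j. {\<omega>\<in>space M. card (Phi \<omega> \<inter> cball 0 (real j)) \<in> {..<n}}"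
  have A: "?A j \<in> sets M" for j by (rule ppp_count_sets[OF ppp B])
  have "measure M (\<Inter>j. ?A j) \<le> (\<Sum>k<n. \<mu> j ^ k / fact k * exp (- \<mu> j))" for j
  proof -
    have "measure M (\<Inter>j. ?A j) \<le> measure M (?A j)"
      by (rule finite_measure_mono) (use A in auto)
    also have "?A j = (\<Union>k<n. {\<omega>\<in>space M. card (Phi \<omega> \<inter> cball 0 (real j)) = k})" by auto
    also have "measure M \<dots> \<le> (\<Sum>k<n. measure M {\<omega>\<in>space M. card (Phi \<omega> \<inter> cball 0 (real j)) = k})"
      by (rule measure_UNION_le) (use ppp_count_sets_eq[OF ppp B] in auto)
    finally show ?thesis unfolding \<mu>_def ppp_count_prob[OF ppp B] .
  qed
  then have "measure M (\<Inter>j. ?A j) \<le> 0"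
    by (intro LIMSEQ_le_const[OF poisson_lower_tail_tendsto_0[OF \<mu>_top]]) auto
  then have "measure M (\<Inter>j. ?A j) = 0" using measure_nonneg[of M "\<Inter>j. ?A j"] by linarith
  then have "(\<Inter>j. ?A j) \<in> null_sets M"
    using A by (auto simp: null_sets_def emeasure_eq_measure)
  then show ?thesis by (rule AE_I') (auto simp: not_le)
qed

lemma ppp_AE_infinite:
  assumes ppp: "poisson_point_process M Phi lam" and lam: "0 < lam"
  shows "AE \<omega> in M. infinite (Phi \<omega>)"
proof -
  have "AE \<omega> in M. \<forall>n. \<exists>j::nat. n \<le> card (Phi \<omega> \<inter> cball 0 (real j))"
    using ppp_AE_exists_cball_count_ge[OF ppp lam] by (simp add: AE_all_countable)
  then show ?thesis
  proof (rule AE_mp, intro AE_I2 impI notI)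
    fix \<omega> assume "\<forall>n. \<exists>j::nat. n \<le> card (Phi \<omega> \<inter> cball 0 (real j))" and fin: "finite (Phi \<omega>)"
    then obtain j :: nat where "Suc (card (Phi \<omega>)) \<le> card (Phi \<omega> \<inter> cball 0 (real j))" by blast
    moreover have "card (Phi \<omega> \<inter> cball 0 (real j)) \<le> card (Phi \<omega>)"
      using fin by (intro card_mono) auto
    ultimately show False by simp
  qed
qed

lemma AE_bounded_if_suminf_nn_integral_finite:
  fixes f :: "nat \<Rightarrow> 'a \<Rightarrow> real"
  assumes meas: "\<And>j. f j \<in> borel_measurable M" and nonneg: "\<And>j x. 0 \<le> f j x"
    and fin: "(\<Sum>j. \<integral>\<^sup>+x. ennreal (f j x) \<partial>M) < \<infinity>"
  shows "AE x in M. \<exists>C. \<forall>j. f j x \<le> C"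
proof -
  have "(\<integral>\<^sup>+x. (\<Sum>j. ennreal (f j x)) \<partial>M) = (\<Sum>j. \<integral>\<^sup>+x. ennreal (f j x) \<partial>M)"
    by (rule nn_integral_suminf) (use meas in measurable)
  then have "AE x in M. (\<Sum>j. ennreal (f j x)) \<noteq> \<infinity>"
    using fin by (intro nn_integral_PInf_AE) (use meas in auto)
  then show ?thesis
  proof (rule AE_mp, intro AE_I2 impI)
    fix x assume "(\<Sum>j. ennreal (f j x)) \<noteq> \<infinity>"
    then have "summable (\<lambda>j. f j x)" by (intro summable_suminf_not_top nonneg) simp
    then have "f j x \<le> (\<Sum>j. f j x)" for j
      using sum_le_suminf[of "\<lambda>j. f j x" "{j}"] nonneg by simp
    then show "\<exists>C. \<forall>j. f j x \<le> C" by blast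
  qed
qed

lemma card_cball_growth_if_dyadic:
  fixes S :: "(real^2) set"
  assumes lf: "locally_finite_points S" and b: "0 \<le> b"
    and dyadic: "\<And>j::nat. (2 powr - b) ^ j * real (card (S \<inter> cball 0 (2 ^ j))) \<le> C"
    and r: "1 \<le> r"
  shows "real (card (S \<inter> cball 0 r)) \<le> C * 2 powr b * r powr b"
proof -
  obtain j :: nat where j: "r \<le> 2 ^ j" "2 ^ j \<le> 2 * r" using exists_dyadic_bracket[OF r] by blast
  have "real (card (S \<inter> cball 0 1)) \<le> C" using dyadic[of 0] by simp
  then have C: "0 \<le> C" by linarith
  have "(2 powr - b) ^ j = inverse ((2 ^ j) powr b)"
    by (simp add: powr_minus powr_realpow[symmetric] powr_powr mult.commute power_inverse)
  then have "real (card (S \<inter> cball 0 (2 ^ j))) = (2 ^ j) powr b * ((2 powr - b) ^ j * real (card (S \<inter> cball 0 (2 ^ j))))"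
    by simp
  also have "\<dots> \<le> (2 ^ j) powr b * C" by (rule mult_left_mono[OF dyadic]) simp
  finally have dyadic_j: "real (card (S \<inter> cball 0 (2 ^ j))) \<le> C * (2 ^ j) powr b"
    by (simp add: mult.commute)
  have "S \<inter> cball 0 r \<subseteq> S \<inter> cball 0 (2 ^ j)" using subset_cball[OF j(1)] by blast
  then have "card (S \<inter> cball 0 r) \<le> card (S \<inter> cball 0 (2 ^ j))"
    by (rule card_mono[OF locally_finite_points_Int_cball[OF lf]])
  then have "real (card (S \<inter> cball 0 r)) \<le> C * (2 ^ j) powr b"
    using dyadic_j by linarith
  also have "(2 ^ j) powr b \<le> (2 * r) powr b" by (rule powr_mono2) (use b j(2) in auto)
  then have "C * (2 ^ j) powr b \<le> C * (2 * r) powr b" by (rule mult_left_mono[OF _ C])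
  also have "\<dots> = C * 2 powr b * r powr b" using r by (simp add: powr_mult)
  finally show ?thesis .
qed

lemma ppp_count_cball_nn_integral:
  assumes ppp: "poisson_point_process M Phi lam" and r: "0 \<le> r"
  shows "(\<integral>\<^sup>+\<omega>. ennreal (real (card (Phi \<omega> \<inter> cball 0 r))) \<partial>M) = ennreal (lam * unit_ball_vol 2 * r\<^sup>2)"
  using ppp_count_nn_integral[OF ppp, of "cball 0 r"] measure_cball_plane[OF r] by (simp add: mult.assoc)

lemma ppp_AE_card_cball_growth:
  assumes ppp: "poisson_point_process M Phi lam" and lam: "0 < lam" and b: "2 < b"
  shows "AE \<omega> in M. \<exists>C. \<forall>r\<ge>1. real (card (Phi \<omega> \<inter> cball 0 r)) \<le> C * r powr b"
proof -
  interpret prob_space M using ppp_prob_space[OF ppp] .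
  define \<rho> where "\<rho> = (2::real) powr - b"
  define c where "c = lam * unit_ball_vol 2"
  have \<rho>: "0 < \<rho>" unfolding \<rho>_def by simp
  have c: "0 < c" unfolding c_def using lam by simp
  have \<rho>4: "4 * \<rho> < 1"
  proof -
    have "4 * \<rho> = 2 powr (2 - b)" unfolding \<rho>_def by (simp add: powr_diff powr_minus divide_inverse)
    also have "\<dots> < 1" using b by (intro powr_less_one) auto
    finally show ?thesis .
  qed
  define N where "N j \<omega> = real (card (Phi \<omega> \<inter> cball 0 (2 ^ j)))" for j :: nat and \<omega>
  have N_meas: "N j \<in> borel_measurable M" for j
    unfolding N_def by (rule measurable_compose[OF ppp_count_measurable[OF ppp]]) auto
  have "(\<integral>\<^sup>+\<omega>. ennreal (\<rho> ^ j * N j \<omega>) \<partial>M) = ennreal (c * (4 * \<rho>) ^ j)" for j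
  proof -
    have "(\<integral>\<^sup>+\<omega>. ennreal (\<rho> ^ j * N j \<omega>) \<partial>M) = (\<integral>\<^sup>+\<omega>. ennreal (\<rho> ^ j) * ennreal (N j \<omega>) \<partial>M)"
      using \<rho> by (intro nn_integral_cong) (simp add: ennreal_mult')
    also have "\<dots> = ennreal (\<rho> ^ j) * ennreal (c * ((2::real) ^ j)\<^sup>2)"
      using N_meas unfolding N_def c_def by (simp add: nn_integral_cmult ppp_count_cball_nn_integral[OF ppp])
    also have "((2::real) ^ j)\<^sup>2 = 4 ^ j" by (simp add: power2_eq_square power_mult_distrib[symmetric])
    also have "ennreal (\<rho> ^ j) * ennreal (c * 4 ^ j) = ennreal (c * (4 * \<rho>) ^ j)"
      using \<rho> by (simp add: ennreal_mult'[symmetric] power_mult_distrib mult_ac)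
    finally show ?thesis .
  qed
  then have "(\<Sum>j. \<integral>\<^sup>+\<omega>. ennreal (\<rho> ^ j * N j \<omega>) \<partial>M) = (\<Sum>j. ennreal (c * (4 * \<rho>) ^ j))"
    by simp
  also have "\<dots> = ennreal (\<Sum>j. c * (4 * \<rho>) ^ j)"
    using \<rho> c \<rho>4 by (intro suminf_ennreal2 summable_mult summable_geometric) auto
  finally have "(\<Sum>j. \<integral>\<^sup>+\<omega>. ennreal (\<rho> ^ j * N j \<omega>) \<partial>M) < \<infinity>" by simp
  moreover have "(\<lambda>\<omega>. \<rho> ^ j * N j \<omega>) \<in> borel_measurable M" for j
    using N_meas by measurable
  ultimately have "AE \<omega> in M. \<exists>C. \<forall>j. \<rho> ^ j * N j \<omega> \<le> C"
    using \<rho> by (intro AE_bounded_if_suminf_nn_integral_finite) (auto simp: N_def)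
  then show ?thesis
    using AE_space
  proof eventually_elim
    case (elim \<omega>)
    then obtain C where "\<And>j. \<rho> ^ j * N j \<omega> \<le> C" by blast
    then have "real (card (Phi \<omega> \<inter> cball 0 r)) \<le> C * 2 powr b * r powr b" if "1 \<le> r" for r
      using b unfolding \<rho>_def N_def
      by (intro card_cball_growth_if_dyadic[OF ppp_locally_finite[OF ppp elim(2)] _ _ that]) auto
    then show ?case by blast
  qed
qed

text \<open>Summability is part of the regularity because the interference term of \<open>SINR\<close> is a
  \<open>suminf\<close>, which is unspecified for a divergent series.\<close>

definition regular_config :: "real \<Rightarrow> (real^2) set \<Rightarrow> bool" where
  "regular_config \<alpha> S \<longleftrightarrow> locally_finite_points S \<and> 0 \<notin> S \<and> infinite S
     \<and> summable (\<lambda>n. kth_dist S (n + 1) powr - \<alpha>)"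

lemma ppp_AE_regular_config:
  assumes ppp: "poisson_point_process M Phi lam" and lam: "0 < lam" and \<alpha>: "2 < \<alpha>"
  shows "AE \<omega> in M. regular_config \<alpha> (Phi \<omega>)"
proof -
  define b where "b = (2 + \<alpha>) / 2"
  have b: "2 < b" "b < \<alpha>" unfolding b_def using \<alpha> by auto
  show ?thesis
    using ppp_AE_not_origin[OF ppp] ppp_AE_infinite[OF ppp lam]
      ppp_AE_card_cball_growth[OF ppp lam b(1)] AE_space
  proof eventually_elim
    case (elim \<omega>)
    have lf: "locally_finite_points (Phi \<omega>)" by (rule ppp_locally_finite[OF ppp elim(4)])
    obtain C where "\<And>r. 1 \<le> r \<Longrightarrow> real (card (Phi \<omega> \<inter> cball 0 r)) \<le> C * r powr b"
      using elim(3) by blast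
    then have "summable (\<lambda>n. kth_dist (Phi \<omega>) (n + 1) powr - \<alpha>)"
      using b by (intro summable_kth_dist_powr[OF lf elim(1,2)]) auto
    then show ?case unfolding regular_config_def using lf elim by blast
  qed
qed

section \<open>Series estimates for the discretisation\<close>

lemma negative_binomial_sums:
  fixes x :: real assumes x: "0 \<le> x" "x < 1"
  shows "(\<lambda>n. real ((n + m) choose m) * x ^ n) sums ((1 / (1 - x)) ^ (m + 1))"
proof (induction m)
  case 0
  then show ?case using geometric_sums[of x] x by (simp add: divide_simps)
next
  case (Suc m)
  let ?a = "\<lambda>n. real ((n + m) choose m) * x ^ n"
  let ?b = "\<lambda>n. x ^ n"
  have sa: "summable (\<lambda>k. norm (?a k))" using Suc.IH x by (simp add: sums_iff abs_mult)
  have sb: "summable (\<lambda>k. norm (?b k))" using x by (simp add: summable_geometric)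
  have cp: "(\<lambda>k. \<Sum>i\<le>k. ?a i * ?b (k - i)) sums ((\<Sum>k. ?a k) * (\<Sum>k. ?b k))"
    by (rule Cauchy_product_sums[OF sa sb])
  have eq: "(\<Sum>i\<le>k. ?a i * ?b (k - i)) = real ((k + Suc m) choose Suc m) * x ^ k" for k
  proof -
    have "(\<Sum>i\<le>k. ?a i * ?b (k - i)) = (\<Sum>i\<le>k. real ((m + i) choose i) * x ^ k)"
    proof (rule sum.cong[OF refl])
      fix i assume "i \<in> {..k}"
      then have "x ^ i * x ^ (k - i) = x ^ k" by (simp add: power_add[symmetric])
      moreover have "(i + m) choose m = (m + i) choose i"
        using binomial_symmetric[of i "m + i"] by (simp add: add.commute)
      ultimately show "?a i * ?b (k - i) = real ((m + i) choose i) * x ^ k"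
        by (simp add: mult.assoc)
    qed
    also have "\<dots> = (\<Sum>i\<le>k. real ((m + i) choose i)) * x ^ k"
      by (simp add: sum_distrib_right)
    also have "(\<Sum>i\<le>k. real ((m + i) choose i)) = real (Suc (m + k) choose k)"
      by (subst of_nat_sum[symmetric]) (simp only: sum_choose_lower)
    also have "Suc (m + k) choose k = (k + Suc m) choose Suc m"
      using binomial_symmetric[of k "Suc (m + k)"] by (simp add: add.commute)
    finally show ?thesis .
  qed
  have "(\<Sum>k. ?a k) = (1 / (1 - x)) ^ (m + 1)" using Suc.IH by (simp add: sums_iff)
  moreover have "(\<Sum>k. ?b k) = 1 / (1 - x)" using geometric_sums[of x] x by (simp add: sums_iff)
  ultimately show ?case using cp unfolding eq by (simp add: power_Suc2 mult_ac)
qed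

lemma power_le_fact_mult_choose: "real N ^ m \<le> fact m * real ((N + m) choose m)"
proof (induction m)
  case 0 then show ?case by simp
next
  case (Suc m)
  have id: "real (Suc (N + m)) * real ((N + m) choose m) = real ((Suc (N + m)) choose Suc m) * real (Suc m)"
    using Suc_times_binomial_eq[of "N + m" m] by (metis of_nat_mult)
  have "real N ^ Suc m = real N * real N ^ m" by simp
  also have "\<dots> \<le> real (Suc (N + m)) * (fact m * real ((N + m) choose m))"
    by (rule mult_mono) (use Suc.IH in auto)
  also have "\<dots> = fact m * (real (Suc (N + m)) * real ((N + m) choose m))" by simp
  also have "\<dots> = fact (Suc m) * real ((N + Suc m) choose Suc m)"
    unfolding id by simp
  finally show ?case .
qed

lemma geometric_poly_series_le:
  fixes x :: real assumes x: "0 < x" "x < 1"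
  shows "summable (\<lambda>n. x ^ n * (real n + real K) ^ m)"
    and "(\<Sum>n. x ^ n * (real n + real K) ^ m) \<le> fact m / (x ^ K * (1 - x) ^ (m + 1))"
proof -
  define b where "b n = real ((n + m) choose m) * x ^ n" for n
  have bs: "b sums ((1 / (1 - x)) ^ (m + 1))" unfolding b_def using negative_binomial_sums x by simp
  then have sb: "summable b" by (simp add: sums_iff)
  have sbK: "summable (\<lambda>n. b (n + K))" using sb by (simp add: summable_iff_shift)
  have bnn: "b n \<ge> 0" for n unfolding b_def using x by simp
  have "(\<Sum>n. b (n + K)) = (\<Sum>n. b n) - (\<Sum>i<K. b i)" by (rule suminf_minus_initial_segment[OF sb])
  also have "\<dots> \<le> (\<Sum>n. b n)" using bnn by (simp add: sum_nonneg)
  also have "\<dots> = (1 / (1 - x)) ^ (m + 1)" using bs by (simp add: sums_iff)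
  finally have bK: "(\<Sum>n. b (n + K)) \<le> (1 / (1 - x)) ^ (m + 1)" .
  define g where "g n = fact m / x ^ K * b (n + K)" for n
  have sg: "summable g" unfolding g_def by (intro summable_mult sbK)
  have fg: "x ^ n * (real n + real K) ^ m \<le> g n" for n
  proof -
    have "(real n + real K) ^ m = real (n + K) ^ m" by simp
    also have "\<dots> \<le> fact m * real ((n + K + m) choose m)" by (rule power_le_fact_mult_choose)
    finally have *: "(real n + real K) ^ m \<le> fact m * real ((n + K + m) choose m)" .
    have "g n = fact m * real ((n + K + m) choose m) * (x ^ (n + K) / x ^ K)"
      unfolding g_def b_def by simp
    also have "x ^ (n + K) / x ^ K = x ^ n" using x by (simp add: power_add)
    finally have "g n = fact m * real ((n + K + m) choose m) * x ^ n" .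
    then show ?thesis using * x by (simp add: mult_left_mono mult.commute)
  qed
  have fnn: "0 \<le> x ^ n * (real n + real K) ^ m" for n using x by simp
  show sf: "summable (\<lambda>n. x ^ n * (real n + real K) ^ m)"
    by (rule summable_comparison_test[OF _ sg]) (use fg fnn in auto)
  have "(\<Sum>n. x ^ n * (real n + real K) ^ m) \<le> (\<Sum>n. g n)"
    by (rule suminf_le[OF fg sf sg])
  also have "(\<Sum>n. g n) = fact m / x ^ K * (\<Sum>n. b (n + K))"
    unfolding g_def by (rule suminf_mult[OF sbK])
  also have "\<dots> \<le> fact m / x ^ K * (1 / (1 - x)) ^ (m + 1)"
    by (rule mult_left_mono[OF bK]) (use x in simp)
  also have "\<dots> = fact m / (x ^ K * (1 - x) ^ (m + 1))" by (simp add: power_one_over)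
  finally show "(\<Sum>n. x ^ n * (real n + real K) ^ m) \<le> fact m / (x ^ K * (1 - x) ^ (m + 1))" .
qed

text \<open>\<open>mesh_term s h K m n\<close> bounds the probability of the \<open>n\<close>-th shell event of mesh
  \<open>h\<close> below, using \<open>n - \<lfloor>s n\<rfloor> \<le> (1 - s) (n + K)\<close>; \<open>mesh_bound s h K m\<close> bounds its
  sum over \<open>n\<close> and tends to \<open>(1 - s)\<^sup>m\<close> as the mesh goes to zero.\<close>

definition mesh_term :: "real \<Rightarrow> real \<Rightarrow> nat \<Rightarrow> nat \<Rightarrow> nat \<Rightarrow> real" where
  "mesh_term s h K m n = exp (-h) ^ n *
     (((1 - s) * (real n + real K) * h) ^ m / fact m * h
      + (\<Sum>i<m. ((real n + real K) * h) ^ i / fact i * h\<^sup>2))"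

definition mesh_bound :: "real \<Rightarrow> real \<Rightarrow> nat \<Rightarrow> nat \<Rightarrow> real" where
  "mesh_bound s h K m = (1 - s) ^ m * exp (h * K) * (h / (1 - exp (-h))) ^ (m + 1)
     + h * (\<Sum>i<m. exp (h * K) * (h / (1 - exp (-h))) ^ (i + 1))"

lemma mesh_bound_eq:
  assumes h: "0 < h"
  shows "((1 - s) * h) ^ m / fact m * h * (fact m / (exp (-h) ^ K * (1 - exp (-h)) ^ (m + 1)))
      + (\<Sum>i<m. h ^ i / fact i * h\<^sup>2 * (fact i / (exp (-h) ^ K * (1 - exp (-h)) ^ (i + 1))))
    = mesh_bound s h K m"
proof -
  define x where "x = exp (-h)"
  have x: "0 < x" "x < 1" unfolding x_def using h by auto
  have xK: "1 / x ^ K = exp (h * K)" unfolding x_def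
    by (simp add: exp_of_nat_mult[symmetric] exp_minus field_simps power_inverse)
  have main: "((1 - s) * h) ^ m / fact m * h * (fact m / (x ^ K * (1 - x) ^ (m + 1)))
      = (1 - s) ^ m * (1 / x ^ K) * (h / (1 - x)) ^ (m + 1)"
    using x by (simp add: power_mult_distrib power_divide)
  have rest: "h ^ i / fact i * h\<^sup>2 * (fact i / (x ^ K * (1 - x) ^ (i + 1)))
      = h * ((1 / x ^ K) * (h / (1 - x)) ^ (i + 1))" for i
    using x by (simp add: field_simps power2_eq_square)
  show ?thesis unfolding x_def[symmetric] main rest unfolding sum_distrib_left[symmetric] xK
    unfolding mesh_bound_def x_def by (simp add: sum_distrib_left)
qed

lemma mesh_term_suminf_le:
  assumes h: "h > 0" and s: "s \<le> 1"
  shows "summable (mesh_term s h K m)" "(\<Sum>n. mesh_term s h K m n) \<le> mesh_bound s h K m"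
proof -
  define x where "x = exp (-h)"
  have x: "0 < x" "x < 1" unfolding x_def using h by auto
  let ?p = "\<lambda>i n. x ^ n * (real n + real K) ^ i"
  have summable_p: "summable (?p i)" for i using geometric_poly_series_le(1)[OF x] .
  have suminf_p: "(\<Sum>n. ?p i n) \<le> fact i / (x ^ K * (1 - x) ^ (i + 1))" for i
    using geometric_poly_series_le(2)[OF x] .
  have decompose: "mesh_term s h K m n = ((1 - s) * h) ^ m / fact m * h * ?p m n
      + (\<Sum>i<m. h ^ i / fact i * h\<^sup>2 * ?p i n)" for n
  proof -
    have pow_main: "((1 - s) * (real n + real K) * h) ^ m = ((1 - s) * h) ^ m * (real n + real K) ^ m"
      by (metis mult.commute mult.left_commute power_mult_distrib)
    have pow_rest: "((real n + real K) * h) ^ i = h ^ i * (real n + real K) ^ i" for i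
      by (simp add: power_mult_distrib mult.commute)
    show ?thesis
      unfolding mesh_term_def x_def pow_main pow_rest by (simp only: distrib_left sum_distrib_left) (simp add: mult_ac)
  qed
  have s1: "summable (\<lambda>n. ((1 - s) * h) ^ m / fact m * h * ?p m n)"
    by (intro summable_mult summable_p)
  have s2: "summable (\<lambda>n. \<Sum>i<m. h ^ i / fact i * h\<^sup>2 * ?p i n)"
    by (intro summable_sum summable_mult summable_p)
  show "summable (mesh_term s h K m)" unfolding decompose by (intro summable_add s1 s2)
  have "(\<Sum>n. mesh_term s h K m n) = (\<Sum>n. ((1 - s) * h) ^ m / fact m * h * ?p m n)
        + (\<Sum>n. \<Sum>i<m. h ^ i / fact i * h\<^sup>2 * ?p i n)"
    unfolding decompose by (rule suminf_add[OF s1 s2, symmetric])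
  also have "(\<Sum>n. ((1 - s) * h) ^ m / fact m * h * ?p m n) = ((1 - s) * h) ^ m / fact m * h * (\<Sum>n. ?p m n)"
    by (rule suminf_mult[OF summable_p])
  also have "(\<Sum>n. \<Sum>i<m. h ^ i / fact i * h\<^sup>2 * ?p i n) = (\<Sum>i<m. \<Sum>n. h ^ i / fact i * h\<^sup>2 * ?p i n)"
    by (rule suminf_sum) (intro summable_mult summable_p)
  also have "\<dots> = (\<Sum>i<m. h ^ i / fact i * h\<^sup>2 * (\<Sum>n. ?p i n))"
    by (intro sum.cong refl suminf_mult summable_p)
  also have "((1 - s) * h) ^ m / fact m * h * (\<Sum>n. ?p m n) + (\<Sum>i<m. h ^ i / fact i * h\<^sup>2 * (\<Sum>n. ?p i n))
      \<le> ((1 - s) * h) ^ m / fact m * h * (fact m / (x ^ K * (1 - x) ^ (m + 1)))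
        + (\<Sum>i<m. h ^ i / fact i * h\<^sup>2 * (fact i / (x ^ K * (1 - x) ^ (i + 1))))"
    using h s by (intro add_mono mult_left_mono sum_mono suminf_p) auto
  also have "\<dots> = mesh_bound s h K m" unfolding x_def by (rule mesh_bound_eq[OF h])
  finally show "(\<Sum>n. mesh_term s h K m n) \<le> mesh_bound s h K m" .
qed

lemma mesh_bound_tendsto: "((\<lambda>h. mesh_bound s h K m) \<longlongrightarrow> (1 - s) ^ m) (at_right 0)"
proof -
  have q: "((\<lambda>h::real. h / (1 - exp (-h))) \<longlongrightarrow> 1) (at_right 0)" by real_asymp
  have e: "((\<lambda>h::real. exp (h * K)) \<longlongrightarrow> 1) (at_right 0)"
    by (rule tendsto_eq_intros refl)+ (auto intro!: tendsto_eq_intros)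
  have i: "((\<lambda>h::real. h) \<longlongrightarrow> 0) (at_right 0)" by (rule tendsto_ident_at)
  have "((\<lambda>h. mesh_bound s h K m) \<longlongrightarrow> (1 - s) ^ m * 1 * 1 ^ (m + 1) + 0 * (\<Sum>i<m. 1 * 1 ^ (i + 1))) (at_right 0)"
    unfolding mesh_bound_def by (intro tendsto_intros q e i)
  then show ?thesis by simp
qed

section \<open>Discretisation in area coordinates\<close>

lemma unit_ball_vol_plane_neq_0 [simp]: "unit_ball_vol (2::real) \<noteq> 0"
  using unit_ball_vol_pos[of 2] by linarith

definition area_radius :: "real \<Rightarrow> real \<Rightarrow> real" where
  "area_radius lam t = sqrt (t / (lam * unit_ball_vol 2))"

lemma area_radius_mono: "0 < lam \<Longrightarrow> t1 \<le> t2 \<Longrightarrow> area_radius lam t1 \<le> area_radius lam t2"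
  unfolding area_radius_def by (intro real_sqrt_le_mono divide_right_mono) auto

lemma area_radius_strict_mono: "0 < lam \<Longrightarrow> t1 < t2 \<Longrightarrow> area_radius lam t1 < area_radius lam t2"
  unfolding area_radius_def by (intro real_sqrt_less_mono divide_strict_right_mono) auto

lemma area_radius_nonneg: "0 < lam \<Longrightarrow> 0 \<le> t \<Longrightarrow> 0 \<le> area_radius lam t"
  unfolding area_radius_def by simp

lemma area_radius_of_mass: "0 < lam \<Longrightarrow> 0 \<le> d \<Longrightarrow> area_radius lam (lam * unit_ball_vol 2 * d\<^sup>2) = d"
  unfolding area_radius_def by simp

lemma area_radius_mult: "0 < lam \<Longrightarrow> 0 \<le> s \<Longrightarrow> area_radius lam (s * t) = sqrt s * area_radius lam t"
  unfolding area_radius_def by (simp add: real_sqrt_mult[symmetric] mult.assoc)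

lemma mass_ball_area_radius:
  assumes "0 < lam" "0 \<le> t"
  shows "lam * measure lborel (ball (0::real^2) (area_radius lam t)) = t"
  using assms unfolding area_radius_def by (simp add: measure_ball_plane)

lemma mass_annulus_area_radius:
  assumes lam: "0 < lam" and t: "0 \<le> t1" "t1 \<le> t2"
  shows "lam * measure lborel (ball (0::real^2) (area_radius lam t2) - ball 0 (area_radius lam t1)) = t2 - t1"
proof -
  have "measure lborel (ball (0::real^2) (area_radius lam t2) - ball 0 (area_radius lam t1))
      = measure lborel (ball (0::real^2) (area_radius lam t2)) - measure lborel (ball (0::real^2) (area_radius lam t1))"
  proof (rule measure_Diff)
    show "emeasure lborel (ball (0::real^2) (area_radius lam t2)) \<noteq> \<infinity>"
      using emeasure_ball[of "area_radius lam t2" "0::real^2"] area_radius_nonneg[OF lam, of t2] t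
      by simp
    show "ball 0 (area_radius lam t1) \<subseteq> ball (0::real^2) (area_radius lam t2)"
      using area_radius_mono[OF lam t(2)] by (rule subset_ball)
  qed auto
  then show ?thesis
    using mass_ball_area_radius[OF lam] t by (simp add: right_diff_distrib)
qed

text \<open>The \<open>L\<close>-th nearest point lies in the annulus between the discs of mass \<open>n h\<close> and
  \<open>(n + 1) h\<close>, and of the \<open>L - 1\<close> nearer points none lies in the disc of mass \<open>m h\<close>.\<close>

definition shell_event ::
  "'w measure \<Rightarrow> ('w \<Rightarrow> (real^2) set) \<Rightarrow> real \<Rightarrow> nat \<Rightarrow> real \<Rightarrow> nat \<Rightarrow> nat \<Rightarrow> 'w set" where
  "shell_event M Phi lam L h m n = (\<Union>i<L.
      {\<omega>\<in>space M. card (Phi \<omega> \<inter> ball 0 (area_radius lam (real m * h))) \<in> {0}}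
    \<inter> {\<omega>\<in>space M. card (Phi \<omega> \<inter> (ball 0 (area_radius lam (real n * h))
                                      - ball 0 (area_radius lam (real m * h)))) \<in> {i}}
    \<inter> {\<omega>\<in>space M. card (Phi \<omega> \<inter> (ball 0 (area_radius lam ((real n + 1) * h))
                                      - ball 0 (area_radius lam (real n * h)))) \<in> {L - i..}})"

lemma weighted_tail_sum_le:
  fixes T p :: "nat \<Rightarrow> real" and L :: nat
  assumes T: "\<And>i. 0 \<le> T i" and p1: "p 1 \<le> h" and p2: "\<And>k. 2 \<le> k \<Longrightarrow> p k \<le> h\<^sup>2" and L: "1 \<le> L"
  shows "(\<Sum>i<L. T i * p (L - i)) \<le> T (L - 1) * h + (\<Sum>i<L - 1. T i * h\<^sup>2)"
proof -
  have "{..<L} = insert (L - 1) {..<L - 1}" using L by auto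
  then have "(\<Sum>i<L. T i * p (L - i)) = T (L - 1) * p 1 + (\<Sum>i<L - 1. T i * p (L - i))"
    using L by simp
  also have "\<dots> \<le> T (L - 1) * h + (\<Sum>i<L - 1. T i * h\<^sup>2)"
    using p1 p2 by (intro add_mono mult_left_mono sum_mono T) auto
  finally show ?thesis .
qed

lemma shell_event_bound:
  fixes n m L :: nat
  assumes ppp: "poisson_point_process M Phi lam" and lam: "0 < lam" and h: "0 < h"
    and mn: "m \<le> n" and L: "1 \<le> L"
  shows "shell_event M Phi lam L h m n \<in> sets M"
    "measure M (shell_event M Phi lam L h m n) \<le> exp (- h) ^ n * (((real n - real m) * h) ^ (L - 1) / fact (L - 1) * h
        + (\<Sum>i<L - 1. ((real n - real m) * h) ^ i / fact i * h\<^sup>2))"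
proof -
  interpret prob_space M using ppp_prob_space[OF ppp] .
  let ?R = "\<lambda>t. ball (0::real^2) (area_radius lam t)"
  define D where "D i = (if i = 0 then ?R (real m * h) else if i = 1 then ?R (real n * h) - ?R (real m * h)
      else ?R ((real n + 1) * h) - ?R (real n * h))" for i :: nat
  let ?E = "\<lambda>i A. {\<omega>\<in>space M. card (Phi \<omega> \<inter> D i) \<in> A}"
  have D: "D i \<in> sets lborel \<and> bounded (D i)" for i
    unfolding D_def by (auto intro: bounded_subset[OF bounded_ball])
  have E: "?E i A \<in> sets M" for i A using ppp_count_sets[OF ppp] D by blast
  have mn_h: "real m * h \<le> real n * h" using mn h by (intro mult_right_mono) auto
  have "lam * measure lborel (D 0) = real m * h"
    unfolding D_def using mass_ball_area_radius[OF lam, of "real m * h"] h by simp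
  moreover have "lam * measure lborel (D 1) = (real n - real m) * h"
    unfolding D_def using mass_annulus_area_radius[OF lam _ mn_h] h by (simp add: left_diff_distrib)
  moreover have "lam * measure lborel (D 2) = h"
    unfolding D_def using mass_annulus_area_radius[OF lam, of "real n * h" "(real n + 1) * h"] h
    by (simp add: algebra_simps)
  ultimately have mass: "lam * measure lborel (D 0) = real m * h"
    "lam * measure lborel (D 1) = (real n - real m) * h" "lam * measure lborel (D 2) = h"
    by auto
  have event: "shell_event M Phi lam L h m n = (\<Union>i<L. ?E 0 {0} \<inter> ?E 1 {i} \<inter> ?E 2 {L - i..})"
    unfolding shell_event_def D_def by simp
  show "shell_event M Phi lam L h m n \<in> sets M" unfolding event using E by blast
  have disj: "D 0 \<inter> D 1 = {}" "D 0 \<inter> D 2 = {}" "D 1 \<inter> D 2 = {}"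
    using subset_ball[OF area_radius_mono[OF lam mn_h]] unfolding D_def by auto
  define T where "T i = exp (- h) ^ n * (((real n - real m) * h) ^ i / fact i)" for i
  have T0: "0 \<le> T i" for i unfolding T_def using mn h by simp
  have joint: "measure M (?E 0 {0} \<inter> ?E 1 {i} \<inter> ?E 2 A) = T i * measure M (?E 2 A)" for i A
  proof -
    have "exp (- (real m * h)) * exp (- ((real n - real m) * h)) = exp (- h) ^ n"
      by (simp add: exp_add[symmetric] exp_of_nat_mult[symmetric] algebra_simps)
    then show ?thesis
      using ppp_indep_counts3[OF ppp _ disj, of "{0}" "{i}" A] D
        ppp_count_prob[OF ppp, of "D 0" 0] ppp_count_prob[OF ppp, of "D 1" i]
      unfolding mass T_def by (simp add: mult_ac)
  qed
  have "measure M (shell_event M Phi lam L h m n) \<le> (\<Sum>i<L. measure M (?E 0 {0} \<inter> ?E 1 {i} \<inter> ?E 2 {L - i..}))"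
    unfolding event by (rule measure_UNION_le) (simp, intro sets.Int E)
  also have "\<dots> = (\<Sum>i<L. T i * measure M (?E 2 {L - i..}))"
    by (simp only: joint)
  also have "\<dots> \<le> T (L - 1) * h + (\<Sum>i<L - 1. T i * h\<^sup>2)"
  proof (rule weighted_tail_sum_le[where p = "\<lambda>k. measure M (?E 2 {k..})", OF T0 _ _ L])
    show "measure M (?E 2 {1..}) \<le> h" using ppp_count_ge1_le[OF ppp, of "D 2"] D mass by simp
    fix k :: nat assume "2 \<le> k"
    then have "measure M (?E 2 {k..}) \<le> measure M (?E 2 {2..})"
      by (intro finite_measure_mono E) auto
    also have "\<dots> \<le> h\<^sup>2" using ppp_count_ge2_le[OF ppp, of "D 2"] D mass lam by simp
    finally show "measure M (?E 2 {k..}) \<le> h\<^sup>2" .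
  qed
  finally show "measure M (shell_event M Phi lam L h m n) \<le> exp (- h) ^ n * (((real n - real m) * h) ^ (L - 1) / fact (L - 1) * h
        + (\<Sum>i<L - 1. ((real n - real m) * h) ^ i / fact i * h\<^sup>2))"
    unfolding T_def by (simp add: algebra_simps sum_distrib_left)
qed

lemma shell_event_le_mesh_term:
  fixes L K n :: nat
  assumes ppp: "poisson_point_process M Phi lam" and lam: "0 < lam" and h: "0 < h"
    and L: "1 \<le> L" and s: "0 \<le> s" "s < 1" and K: "1 \<le> real K * (1 - s)"
  shows "shell_event M Phi lam L h (nat \<lfloor>s * real n\<rfloor>) n \<in> sets M"
    "measure M (shell_event M Phi lam L h (nat \<lfloor>s * real n\<rfloor>) n) \<le> mesh_term s h K (L - 1) n"
proof -
  define m where "m = nat \<lfloor>s * real n\<rfloor>"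
  have sn: "0 \<le> s * real n" using s by simp
  have m1: "real m \<le> s * real n" unfolding m_def using sn by simp
  have m2: "s * real n - 1 \<le> real m" unfolding m_def using sn by linarith
  have "s * real n \<le> real n" using s by (simp add: mult_left_le_one_le)
  then have mn: "m \<le> n" using m1 by linarith
  note E = shell_event_bound[OF ppp lam h mn L]
  show "shell_event M Phi lam L h (nat \<lfloor>s * real n\<rfloor>) n \<in> sets M" using E(1) unfolding m_def .
  have d0: "0 \<le> (real n - real m) * h" using mn h by simp
  have d1: "(real n - real m) * h \<le> (1 - s) * (real n + real K) * h"
    using m2 K h by (intro mult_right_mono) (auto simp: algebra_simps)
  have d2: "(real n - real m) * h \<le> (real n + real K) * h"
    using h by (intro mult_right_mono) auto
  have "((real n - real m) * h) ^ (L - 1) \<le> ((1 - s) * (real n + real K) * h) ^ (L - 1)"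
    by (rule power_mono[OF d1 d0])
  moreover have "((real n - real m) * h) ^ i \<le> ((real n + real K) * h) ^ i" for i
    by (rule power_mono[OF d2 d0])
  ultimately have "exp (- h) ^ n * (((real n - real m) * h) ^ (L - 1) / fact (L - 1) * h
        + (\<Sum>i<L - 1. ((real n - real m) * h) ^ i / fact i * h\<^sup>2)) \<le> mesh_term s h K (L - 1) n"
    unfolding mesh_term_def using h
    by (intro mult_left_mono add_mono sum_mono divide_right_mono mult_right_mono) auto
  then show "measure M (shell_event M Phi lam L h (nat \<lfloor>s * real n\<rfloor>) n) \<le> mesh_term s h K (L - 1) n"
    using E(2) unfolding m_def by linarith
qed

lemma shell_events_union_le_mesh_bound:
  fixes L K :: nat
  assumes ppp: "poisson_point_process M Phi lam" and lam: "0 < lam" and h: "0 < h"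
    and L: "1 \<le> L" and s: "0 \<le> s" "s < 1" and K: "1 \<le> real K * (1 - s)"
  defines "U \<equiv> \<Union>n. shell_event M Phi lam L h (nat \<lfloor>s * real n\<rfloor>) n"
  shows "U \<in> sets M" "measure M U \<le> mesh_bound s h K (L - 1)"
proof -
  interpret prob_space M using ppp_prob_space[OF ppp] .
  note E = shell_event_le_mesh_term[OF ppp lam h L s K]
  show "U \<in> sets M" unfolding U_def using E(1) by auto
  have sb: "summable (mesh_term s h K (L - 1))" using mesh_term_suminf_le(1)[OF h] s by simp
  have sm: "summable (\<lambda>n. measure M (shell_event M Phi lam L h (nat \<lfloor>s * real n\<rfloor>) n))"
    by (rule summable_comparison_test[OF _ sb]) (use E(2) in auto)
  have "measure M U \<le> (\<Sum>n. measure M (shell_event M Phi lam L h (nat \<lfloor>s * real n\<rfloor>) n))"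
    unfolding U_def by (rule finite_measure_subadditive_countably[OF _ sm]) (use E(1) in auto)
  also have "\<dots> \<le> (\<Sum>n. mesh_term s h K (L - 1) n)" by (rule suminf_le[OF E(2) sm sb])
  also have "\<dots> \<le> mesh_bound s h K (L - 1)" using mesh_term_suminf_le(2)[OF h] s by simp
  finally show "measure M U \<le> mesh_bound s h K (L - 1)" .
qed

lemma mem_shell_event_if_nearest_far:
  fixes L :: nat
  assumes \<omega>: "\<omega> \<in> space M" and lf: "locally_finite_points (Phi \<omega>)" and z: "0 \<notin> Phi \<omega>"
    and inf: "infinite (Phi \<omega>)" and L: "1 \<le> L" and lam: "0 < lam" and h: "0 < h"
    and s: "0 \<le> s" "s < 1" and far: "sqrt s * kth_dist (Phi \<omega>) L \<le> kth_dist (Phi \<omega>) 1"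
  shows "\<omega> \<in> (\<Union>n. shell_event M Phi lam L h (nat \<lfloor>s * real n\<rfloor>) n)"
proof -
  let ?S = "Phi \<omega>" and ?R = "area_radius lam"
  define d where "d = kth_dist ?S L"
  have d: "0 < d" unfolding d_def by (rule kth_dist_pos[OF lf z inf L])
  define t where "t = lam * unit_ball_vol 2 * d\<^sup>2"
  have t: "0 \<le> t / h" unfolding t_def using lam h by simp
  define n where "n = nat \<lfloor>t / h\<rfloor>"
  define m where "m = nat \<lfloor>s * real n\<rfloor>"
  have "real n \<le> t / h" "t / h < real n + 1" unfolding n_def using t by linarith+
  then have "real n * h \<le> t" "t < (real n + 1) * h" using h by (simp_all add: field_simps)
  moreover have "?R t = d" unfolding t_def using lam d by (intro area_radius_of_mass) auto
  ultimately have Rn: "?R (real n * h) \<le> d" and Rn1: "d < ?R ((real n + 1) * h)"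
    using area_radius_mono[OF lam] area_radius_strict_mono[OF lam] by metis+
  have m: "real m \<le> s * real n" unfolding m_def using s by simp
  have "?R (real m * h) \<le> ?R (s * (real n * h))"
    using m h by (intro area_radius_mono[OF lam]) (simp add: mult_right_mono mult.assoc[symmetric])
  also have "\<dots> = sqrt s * ?R (real n * h)" by (rule area_radius_mult[OF lam s(1)])
  also have "\<dots> \<le> kth_dist ?S 1" using Rn s far unfolding d_def by (meson mult_left_mono order_trans real_sqrt_ge_zero)
  finally have Rm: "?R (real m * h) \<le> kth_dist ?S 1" .
  have Rnn: "?R (real n * h) \<le> ?R ((real n + 1) * h)"
    using h by (intro area_radius_mono[OF lam] mult_right_mono) auto
  let ?A = "?S \<inter> ball 0 (?R (real m * h))"
  let ?B = "?S \<inter> ball 0 (?R (real n * h))"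
  let ?C = "?S \<inter> ball 0 (?R ((real n + 1) * h))"
  have A: "card ?A = 0"
    using kth_dist_less_if_card_ball[OF lf order_refl, of "?R (real m * h)"] Rm by fastforce
  then have "?A = {}" using locally_finite_points_Int_ball[OF lf] by simp
  then have P2: "?S \<inter> (ball 0 (?R (real n * h)) - ball 0 (?R (real m * h))) = ?B" by auto
  have BL: "card ?B < L"
    using kth_dist_less_if_card_ball[OF lf L, of "?R (real n * h)"] Rn unfolding d_def by fastforce
  have CL: "L \<le> card ?C" using card_ball_ge_if_kth_dist_less[OF lf inf] Rn1 unfolding d_def by simp
  have "?S \<inter> (ball 0 (?R ((real n + 1) * h)) - ball 0 (?R (real n * h))) = ?C - ?B" by auto
  moreover have "?B \<subseteq> ?C" using subset_ball[OF Rnn] by auto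
  ultimately have P3: "card (?S \<inter> (ball 0 (?R ((real n + 1) * h)) - ball 0 (?R (real n * h)))) = card ?C - card ?B"
    using locally_finite_points_Int_ball[OF lf] by (simp add: card_Diff_subset)
  have "\<omega> \<in> shell_event M Phi lam L h m n"
    unfolding shell_event_def using \<omega> A P2 P3 BL CL by auto
  then show ?thesis unfolding m_def by blast
qed

lemma integral_le_if_AE_nearest_far:
  fixes L :: nat and F :: "'w \<Rightarrow> real"
  assumes ppp: "poisson_point_process M Phi lam" and lam: "0 < lam" and L: "1 \<le> L"
    and s: "0 \<le> s" "s < 1" and F: "integrable M F"
    and AE_far: "AE \<omega> in M. F \<omega> \<le> of_bool (locally_finite_points (Phi \<omega>) \<and> 0 \<notin> Phi \<omega>
        \<and> infinite (Phi \<omega>) \<and> sqrt s * kth_dist (Phi \<omega>) L \<le> kth_dist (Phi \<omega>) 1)"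
  shows "integral\<^sup>L M F \<le> (1 - s) ^ (L - 1)"
proof -
  interpret prob_space M using ppp_prob_space[OF ppp] .
  define K where "K = nat \<lceil>1 / (1 - s)\<rceil>"
  have "1 / (1 - s) \<le> real K" unfolding K_def by linarith
  then have K: "1 \<le> real K * (1 - s)" using s by (simp add: field_simps)
  have bound: "integral\<^sup>L M F \<le> mesh_bound s h K (L - 1)" if h: "0 < h" for h
  proof -
    define U where "U = (\<Union>n. shell_event M Phi lam L h (nat \<lfloor>s * real n\<rfloor>) n)"
    note U = shell_events_union_le_mesh_bound[OF ppp lam h L s K, folded U_def]
    have "AE \<omega> in M. F \<omega> \<le> indicator U \<omega>"
      using AE_far AE_space
    proof eventually_elim
      case (elim \<omega>)
      have "of_bool (locally_finite_points (Phi \<omega>) \<and> 0 \<notin> Phi \<omega> \<and> infinite (Phi \<omega>)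
          \<and> sqrt s * kth_dist (Phi \<omega>) L \<le> kth_dist (Phi \<omega>) 1) \<le> (indicator U \<omega> :: real)"
        using mem_shell_event_if_nearest_far[OF elim(2) _ _ _ L lam h s, of Phi]
        unfolding U_def of_bool_def by (auto split: split_indicator)
      then show ?case using elim(1) by linarith
    qed
    then have "integral\<^sup>L M F \<le> integral\<^sup>L M (indicator U :: 'w \<Rightarrow> real)"
      by (intro integral_mono_AE F) (use U(1) in \<open>simp add: less_top[symmetric]\<close>)
    also have "\<dots> = measure M U" using U(1) by simp
    also have "\<dots> \<le> mesh_bound s h K (L - 1)" by (rule U(2))
    finally show ?thesis .
  qed
  show ?thesis
  proof (rule tendsto_le[OF _ mesh_bound_tendsto tendsto_const])
    show "\<forall>\<^sub>F h in at_right 0. integral\<^sup>L M F \<le> mesh_bound s h K (L - 1)"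
      using bound eventually_at_right_less[of 0] by (auto elim!: eventually_mono)
  qed simp
qed

section \<open>The signal-to-interference ratio of the \<open>L\<close>-th station\<close>

lemma SINR_eq_all_marks:
  assumes "\<forall>i\<ge>1. c i"
  shows "SINR S c L \<alpha> P \<sigma> k = SINR S (\<lambda>_. True) L \<alpha> P \<sigma> k"
proof -
  have "(\<Sum>i\<in>{1..L} - {k}. of_bool (c i) * P * kth_dist S i powr - \<alpha>)
      = (\<Sum>i\<in>{1..L} - {k}. of_bool True * P * kth_dist S i powr - \<alpha>)"
    by (rule sum.cong) (use assms in auto)
  moreover have "(\<lambda>n. of_bool (c (n + L + 1)) * P * kth_dist S (n + L + 1) powr - \<alpha>)
      = (\<lambda>n. of_bool True * P * kth_dist S (n + L + 1) powr - \<alpha>)"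
    using assms by auto
  ultimately show ?thesis unfolding SINR_def by simp
qed

lemma SINR_last_less:
  fixes L :: nat
  assumes reg: "regular_config \<alpha> S" and L: "2 \<le> L" and P: "0 < P" and \<sigma>: "0 \<le> \<sigma>" and \<alpha>: "0 < \<alpha>"
  shows "SINR S (\<lambda>_. True) L \<alpha> P \<sigma> L
    < kth_dist S L powr - \<alpha> / (kth_dist S 1 powr - \<alpha> + (real L - 2) * kth_dist S L powr - \<alpha>)"
proof -
  have lf: "locally_finite_points S" and z: "0 \<notin> S" and inf: "infinite S"
    and sm: "summable (\<lambda>n. kth_dist S (n + 1) powr - \<alpha>)"
    using reg unfolding regular_config_def by auto
  define a where "a i = kth_dist S i powr - \<alpha>" for i
  have a_pos: "0 < a i" if "1 \<le> i" for i unfolding a_def using kth_dist_pos[OF lf z inf that] by simp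
  have a_ge: "a L \<le> a i" if "1 \<le> i" "i \<le> L" for i
    unfolding a_def using \<alpha> kth_dist_pos[OF lf z inf that(1)] kth_dist_mono[OF lf inf that]
    by (intro powr_mono2') auto
  have split: "{1..L} - {L} = insert 1 ({2..L} - {L})" using L by auto
  have "real (L - 2) * a L \<le> (\<Sum>i\<in>{2..L} - {L}. a i)"
    using sum_bounded_below[of "{2..L} - {L}" "a L" a] a_ge L by simp
  then have near: "a 1 + (real L - 2) * a L \<le> (\<Sum>i\<in>{1..L} - {L}. a i)"
    unfolding split using L by (simp add: of_nat_diff)
  have tail: "summable (\<lambda>n. a (n + L + 1))"
    using sm summable_iff_shift[of "\<lambda>n. a (n + 1)" L] unfolding a_def by (simp add: add.assoc)
  then have far: "0 < (\<Sum>n. a (n + L + 1))" by (rule suminf_pos) (simp add: a_pos)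
  have "0 \<le> (real L - 2) * a L" using a_pos[of L] L by simp
  then have den: "0 < a 1 + (real L - 2) * a L" using a_pos[of 1] by linarith
  have "SINR S (\<lambda>_. True) L \<alpha> P \<sigma> L
      = P * a L / ((\<Sum>i\<in>{1..L} - {L}. P * a i) + (\<Sum>n. P * a (n + L + 1)) + \<sigma>)"
    unfolding SINR_def a_def by (simp add: mult.assoc)
  also have "\<dots> = P * a L / (P * (\<Sum>i\<in>{1..L} - {L}. a i) + P * (\<Sum>n. a (n + L + 1)) + \<sigma>)"
    by (simp only: sum_distrib_left suminf_mult[OF tail])
  also have "\<dots> < P * a L / (P * (a 1 + (real L - 2) * a L))"
  proof (rule divide_strict_left_mono)
    have "P * (a 1 + (real L - 2) * a L) \<le> P * (\<Sum>i\<in>{1..L} - {L}. a i)"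
      using near P by (intro mult_left_mono) auto
    moreover have "0 < P * (\<Sum>n. a (n + L + 1))" using far P by simp
    ultimately show lt: "P * (a 1 + (real L - 2) * a L)
        < P * (\<Sum>i\<in>{1..L} - {L}. a i) + P * (\<Sum>n. a (n + L + 1)) + \<sigma>"
      using \<sigma> by linarith
    have "0 < P * (a 1 + (real L - 2) * a L)" using P den by simp
    with lt show "0 < (P * (\<Sum>i\<in>{1..L} - {L}. a i) + P * (\<Sum>n. a (n + L + 1)) + \<sigma>)
        * (P * (a 1 + (real L - 2) * a L))"
      by simp
    show "0 < P * a L" using P a_pos[of L] L by simp
  qed
  also have "\<dots> = a L / (a 1 + (real L - 2) * a L)" using P by simp
  finally show ?thesis unfolding a_def .
qed

lemma scaled_le_if_powr_neg_le:
  fixes d1 dL t \<alpha> :: real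
  assumes d1: "0 < d1" and dL: "0 < dL" and t: "0 < t" and \<alpha>: "0 < \<alpha>"
    and le: "d1 powr - \<alpha> \<le> t * dL powr - \<alpha>"
  shows "sqrt (t powr (- 2 / \<alpha>)) * dL \<le> d1"
proof -
  have "(t * dL powr - \<alpha>) powr (- 1 / \<alpha>) \<le> (d1 powr - \<alpha>) powr (- 1 / \<alpha>)"
    by (rule powr_mono2') (use \<alpha> d1 le in auto)
  also have "(d1 powr - \<alpha>) powr (- 1 / \<alpha>) = d1"
    using \<alpha> d1 by (simp add: powr_powr)
  also have "(t * dL powr - \<alpha>) powr (- 1 / \<alpha>) = t powr (- 1 / \<alpha>) * dL"
    using \<alpha> dL t by (simp add: powr_mult powr_powr)
  also have "t powr (- 1 / \<alpha>) = sqrt (t powr (- 2 / \<alpha>))"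
    by (simp add: powr_half_sqrt[symmetric] powr_powr)
  finally show ?thesis .
qed

lemma AE_all_marks_if_bernoulli_1:
  fixes c :: "nat \<Rightarrow> 'w \<Rightarrow> bool"
  assumes "prob_space M"
    and dist: "\<And>i. 1 \<le> i \<Longrightarrow> distr M (count_space UNIV) (c i) = measure_pmf (bernoulli_pmf 1)"
    and meas: "\<And>i. 1 \<le> i \<Longrightarrow> c i \<in> measurable M (count_space UNIV)"
  shows "AE \<omega> in M. \<forall>i\<ge>1. c i \<omega>"
proof -
  interpret prob_space M by fact
  have "AE \<omega> in M. 1 \<le> i \<longrightarrow> c i \<omega>" for i
  proof (cases "1 \<le> i")
    case True
    have "emeasure M (c i -` {True} \<inter> space M) = emeasure (distr M (count_space UNIV) (c i)) {True}"
      by (rule emeasure_distr[OF meas[OF True], symmetric]) simp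
    also have "\<dots> = 1" using dist[OF True] by (simp add: emeasure_pmf_single)
    finally have "prob (c i -` {True} \<inter> space M) = 1" by (simp add: emeasure_eq_measure)
    then have "AE \<omega> in M. \<omega> \<in> c i -` {True} \<inter> space M" by (rule AE_prob_1)
    then show ?thesis by (rule AE_mp) (auto intro!: AE_I2)
  qed simp
  then show ?thesis by (simp add: AE_all_countable)
qed

lemma SINR_last_less_inverse:
  fixes L :: nat
  assumes reg: "regular_config \<alpha> S" and L: "2 \<le> L" and P: "0 < P" and \<sigma>: "0 \<le> \<sigma>" and \<alpha>: "0 < \<alpha>"
  shows "SINR S (\<lambda>_. True) L \<alpha> P \<sigma> L < 1 / (real L - 1)"
proof -
  have lf: "locally_finite_points S" and z: "0 \<notin> S" and inf: "infinite S"
    using reg unfolding regular_config_def by auto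
  define x where "x = kth_dist S L powr - \<alpha>"
  define y where "y = kth_dist S 1 powr - \<alpha>"
  have x: "0 < x" unfolding x_def using kth_dist_pos[OF lf z inf, of L] L by simp
  have "x \<le> y"
    unfolding x_def y_def using \<alpha> L kth_dist_pos[OF lf z inf, of 1] kth_dist_mono[OF lf inf, of 1 L]
    by (intro powr_mono2') auto
  then have le: "(real L - 1) * x \<le> y + (real L - 2) * x" by (simp add: algebra_simps)
  have pos: "0 < (real L - 1) * x" using x L by simp
  then have "0 < (y + (real L - 2) * x) * ((real L - 1) * x)" using le by simp
  then have "x / (y + (real L - 2) * x) \<le> x / ((real L - 1) * x)"
    using x le by (intro divide_left_mono) auto
  also have "\<dots> = 1 / (real L - 1)" using x by simp
  finally show ?thesis
    using SINR_last_less[OF reg L P \<sigma> \<alpha>] unfolding x_def y_def by linarith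
qed

lemma nearest_far_if_SINR_last_ge:
  fixes L :: nat
  assumes reg: "regular_config \<alpha> S" and L: "2 \<le> L" and P: "0 < P" and \<sigma>: "0 \<le> \<sigma>" and \<alpha>: "0 < \<alpha>"
    and \<theta>: "0 < \<theta>" and ge: "\<theta> \<le> SINR S (\<lambda>_. True) L \<alpha> P \<sigma> L"
  shows "sqrt ((1 / \<theta> - (real L - 2)) powr (- 2 / \<alpha>)) * kth_dist S L \<le> kth_dist S 1"
proof -
  have lf: "locally_finite_points S" and z: "0 \<notin> S" and inf: "infinite S"
    using reg unfolding regular_config_def by auto
  define x where "x = kth_dist S L powr - \<alpha>"
  define y where "y = kth_dist S 1 powr - \<alpha>"
  have x: "0 < x" and y: "0 < y"
    unfolding x_def y_def using kth_dist_pos[OF lf z inf, of L] kth_dist_pos[OF lf z inf, of 1] L by simp_all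
  have "0 \<le> (real L - 2) * x" using x L by simp
  then have den: "0 < y + (real L - 2) * x" using y by linarith
  have "\<theta> < x / (y + (real L - 2) * x)"
    using ge SINR_last_less[OF reg L P \<sigma> \<alpha>] unfolding x_def y_def by linarith
  then have "\<theta> * (y + (real L - 2) * x) < x" using den by (simp add: field_simps)
  then have le: "y \<le> (1 / \<theta> - (real L - 2)) * x" using \<theta> by (simp add: field_simps)
  have "0 < 1 / \<theta> - (real L - 2)"
  proof (rule ccontr)
    assume "\<not> 0 < 1 / \<theta> - (real L - 2)"
    then have "(1 / \<theta> - (real L - 2)) * x \<le> 0" using x by (simp add: mult_nonpos_nonneg)
    then show False using le y by linarith
  qed
  then show ?thesis
    using le x_def y_def kth_dist_pos[OF lf z inf] L \<alpha> by (intro scaled_le_if_powr_neg_le) auto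
qed

lemma coverage_PL_eq_0:
  fixes L :: nat
  assumes AE: "AE \<omega> in M. regular_config alpha (Phi \<omega>) \<and> (\<forall>i\<ge>1. c i \<omega>)"
    and L: "2 \<le> L" and P: "0 < P" and sigma2: "0 \<le> sigma2" and alpha: "0 < alpha"
    and gamma: "0 < gamma" and high: "gamma / (real L - 1) \<le> beta"
  shows "coverage_PL M Phi c L alpha P sigma2 gamma beta = 0"
proof -
  have \<theta>: "1 / (real L - 1) \<le> beta / gamma"
    using high gamma L by (simp add: field_simps)
  have "AE \<omega> in M. (\<Prod>k\<in>{1..L}. of_bool (beta / gamma \<le> SINR (Phi \<omega>) (\<lambda>i. c i \<omega>) L alpha P sigma2 k))
      = (0::real)"
    using AE
  proof eventually_elim
    case (elim \<omega>)
    then have "\<not> beta / gamma \<le> SINR (Phi \<omega>) (\<lambda>i. c i \<omega>) L alpha P sigma2 L"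
      using \<theta> SINR_last_less_inverse[OF _ L P sigma2 alpha] SINR_eq_all_marks[of "\<lambda>i. c i \<omega>"] by force
    then show ?case using L by (intro prod_zero bexI[of _ L]) auto
  qed
  then show ?thesis unfolding coverage_PL_def by (rule integral_eq_zero_AE)
qed

lemma coverage_PL_le:
  fixes L :: nat
  assumes ppp: "poisson_point_process M Phi lam" and lam: "0 < lam"
    and AE: "AE \<omega> in M. regular_config alpha (Phi \<omega>) \<and> (\<forall>i\<ge>1. c i \<omega>)"
    and L: "2 \<le> L" and P: "0 < P" and sigma2: "0 \<le> sigma2" and alpha: "0 < alpha"
    and gamma: "0 < gamma" and beta: "0 < beta" and low: "beta < gamma / (real L - 1)"
  shows "coverage_PL M Phi c L alpha P sigma2 gamma beta
    \<le> (1 - (gamma / beta - (real L - 2)) powr (- 2 / alpha)) ^ (L - 1)"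
proof -
  define s where "s = (gamma / beta - (real L - 2)) powr (- 2 / alpha)"
  have "real L - 1 < gamma / beta" using low beta L by (simp add: field_simps)
  then have s: "0 \<le> s" "s < 1" unfolding s_def using alpha by (auto intro!: powr_less_one)
  define F where "F \<omega> = (\<Prod>k\<in>{1..L}. of_bool (beta / gamma \<le> SINR (Phi \<omega>) (\<lambda>i. c i \<omega>) L alpha P sigma2 k) :: real)"
    for \<omega>
  have "integral\<^sup>L M F \<le> (1 - s) ^ (L - 1)"
  proof (cases "integrable M F")
    case True
    have "AE \<omega> in M. F \<omega> \<le> of_bool (locally_finite_points (Phi \<omega>) \<and> 0 \<notin> Phi \<omega>
        \<and> infinite (Phi \<omega>) \<and> sqrt s * kth_dist (Phi \<omega>) L \<le> kth_dist (Phi \<omega>) 1)"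
      using AE
    proof eventually_elim
      case (elim \<omega>)
      show ?case
      proof (cases "beta / gamma \<le> SINR (Phi \<omega>) (\<lambda>i. c i \<omega>) L alpha P sigma2 L")
        case True
        then have "sqrt s * kth_dist (Phi \<omega>) L \<le> kth_dist (Phi \<omega>) 1"
          using elim nearest_far_if_SINR_last_ge[OF _ L P sigma2 alpha, of _ "beta / gamma"]
            SINR_eq_all_marks[of "\<lambda>i. c i \<omega>"] beta gamma
          unfolding s_def by simp
        moreover have "F \<omega> \<le> 1" unfolding F_def by (intro prod_le_1) auto
        ultimately show ?thesis using elim unfolding regular_config_def by simp
      next
        case False
        then have "F \<omega> = 0" unfolding F_def using L by (intro prod_zero bexI[of _ L]) auto
        then show ?thesis by simp
      qed
    qed
    then show ?thesis
      using L s by (intro integral_le_if_AE_nearest_far[OF ppp lam _ _ _ True]) auto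
  qed (use s in \<open>simp add: not_integrable_integral_eq\<close>)
  then show ?thesis unfolding coverage_PL_def F_def s_def .
qed

theorem corollary1:
  fixes M :: "'w measure" and Phi :: "'w \<Rightarrow> (real^2) set" and c :: "nat \<Rightarrow> 'w \<Rightarrow> bool"
    and L :: nat and lam alpha P sigma2 gamma beta p q :: real
  assumes ppp: "poisson_point_process M Phi lam"
    and lam: "lam > 0" and alpha: "alpha > 2" and P: "P > 0" and sigma2: "sigma2 \<ge> 0"
    and gamma: "gamma > 0" and beta: "beta > 0"
    and pq: "p \<in> {0..1}" "q \<in> {0..1}"
    and a_dist: "\<And>i. i \<in> {1..L} \<Longrightarrow>
                   distr M (count_space UNIV) (c i) = measure_pmf (bernoulli_pmf p)"
    and b_dist: "\<And>j. j \<ge> L + 1 \<Longrightarrow>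
                   distr M (count_space UNIV) (c j) = measure_pmf (bernoulli_pmf q)"
    and c_indep: "prob_space.indep_vars M (\<lambda>_. count_space UNIV) c {1..}"
    and p1: "p = 1" and q1: "q = 1"
    and L2: "L \<ge> 2"
  shows "(beta < gamma / (real L - 1) \<longrightarrow>
            coverage_PL M Phi c L alpha P sigma2 gamma beta
              \<le> (1 - (gamma / beta - (real L - 2)) powr (- 2 / alpha)) ^ (L - 1))
       \<and> (beta \<ge> gamma / (real L - 1) \<longrightarrow>
            coverage_PL M Phi c L alpha P sigma2 gamma beta = 0)"
proof -
  interpret prob_space M using ppp_prob_space[OF ppp] .
  have "AE \<omega> in M. \<forall>i\<ge>1. c i \<omega>"
  proof (rule AE_all_marks_if_bernoulli_1[OF prob_space_axioms])
    fix i :: nat assume "1 \<le> i"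
    then show "distr M (count_space UNIV) (c i) = measure_pmf (bernoulli_pmf 1)"
      using a_dist[of i] b_dist[of i] p1 q1 by (cases "i \<le> L") auto
    show "c i \<in> measurable M (count_space UNIV)"
      using c_indep \<open>1 \<le> i\<close> unfolding indep_vars_def by auto
  qed
  then have AE: "AE \<omega> in M. regular_config alpha (Phi \<omega>) \<and> (\<forall>i\<ge>1. c i \<omega>)"
    using ppp_AE_regular_config[OF ppp lam alpha] by eventually_elim blast
  have alpha0: "0 < alpha" using alpha by simp
  show ?thesis
    using coverage_PL_le[OF ppp lam AE L2 P sigma2 alpha0 gamma beta]
      coverage_PL_eq_0[OF AE L2 P sigma2 alpha0 gamma] by blast
qed

end
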